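(* Let $F$ be a field of characteristic $0$, $n\ge 2$, $i=\lfloor n/2\rfloor$, $j=\lfloor (n-1)/2\rfloor$. Let $I\subseteq F[x_1,\dots,x_n]$ be the ideal generated by $x_{\ell+i}+x_\ell$ for $\ell=1,\dots,i$, together with $x_n$ if $n$ is odd. Then for every integer $k\ge 0$, $$r_{(n,2k+2j+1)}-\frac{2k+2j+1}{2j+1}\,h_{(i,k)}(x_1^2,\dots,x_i^2)\in I,$$ where $h_{(i,k)}$ is the complete homogeneous symmetric polynomial of degree $k$ in $i$ variables.
   Context: $p_k=x_1^k+\dots+x_n^k$. $S_n$ is the algebra of symmetric polynomials in $F[x_1,\dots,x_n]$. For $f\in S_n$, $\mathrm{Repr}(f)\in F[y_1,\dots,y_n]$ denotes the unique polynomial with $f=\mathrm{Repr}(f)(p_1,\dots,p_n)$. Regard $\mathrm{Repr}(f)$ as a polynomial in $y_1,y_3,\dots,y_{2j+1}$ with coefficients in $F[y_2,y_4,\dots,y_{2i}]$. For nonnegative integers $(c_1,c_3,\dots,c_{2j+1})$, let $g$ be the coefficient of $y_1^{c_1}y_3^{c_3}\cdots y_{2j+1}^{c_{2j+1}}$; the multiplier of $f$ at $(c_1,\dots,c_{2j+1})$ is $g(p_2,p_4,\dots,p_{2i})$. For $k\ge 2j+1$, $r_{(n,k)}$ is the multiplier of $p_k$ at $(0,\dots,0,1)$. *)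

theory Defs
  imports "HOL-Library.Poly_Mapping"
begin

text \<open>Multivariate polynomials over a coefficient ring 'a in variables indexed by nat,
  represented as finitely supported maps from monomials (exponent vectors) to coefficients.
  Variables x_1,...,x_n (resp. y_1,...,y_n) are those with index in {1..n}.\<close>

type_synonym 'a mpoly = "(nat \<Rightarrow>\<^sub>0 nat) \<Rightarrow>\<^sub>0 'a"

definition Var :: "nat \<Rightarrow> 'a::comm_semiring_1 mpoly" where
  "Var v = Poly_Mapping.single (Poly_Mapping.single v 1) 1"

definition Const :: "'a::comm_semiring_1 \<Rightarrow> 'a mpoly" where
  "Const c = Poly_Mapping.single 0 c"

definition vars :: "'a::zero mpoly \<Rightarrow> nat set" where
  "vars p = \<Union> (Poly_Mapping.keys ` Poly_Mapping.keys p)"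

definition subst :: "(nat \<Rightarrow> 'a::comm_semiring_1 mpoly) \<Rightarrow> 'a mpoly \<Rightarrow> 'a mpoly" where
  "subst a p = (\<Sum>m\<in>Poly_Mapping.keys p.
      Const (Poly_Mapping.lookup p m) * (\<Prod>v\<in>Poly_Mapping.keys m. a v ^ Poly_Mapping.lookup m v))"

definition power_sum :: "nat \<Rightarrow> nat \<Rightarrow> 'a::comm_semiring_1 mpoly" where
  "power_sum n k = (\<Sum>l=1..n. Var l ^ k)"

definition Repr :: "nat \<Rightarrow> 'a::comm_semiring_1 mpoly \<Rightarrow> 'a mpoly" where
  "Repr n f = (THE q. vars q \<subseteq> {1..n} \<and> subst (power_sum n) q = f)"

text \<open>Coefficient of y_1^{c_1} y_3^{c_3} ... y_{2j+1}^{c_{2j+1}} in Repr(f), viewed as a polynomial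
  in the odd variables y_1,y_3,...,y_{2j+1} (j = (n-1) div 2) with coefficients in F[y_2,...,y_{2i}].
  The exponents are given by c at odd indices.\<close>
definition odd_coeff :: "nat \<Rightarrow> 'a::comm_semiring_1 mpoly \<Rightarrow> (nat \<Rightarrow> nat) \<Rightarrow> 'a mpoly" where
  "odd_coeff n f c = (\<Sum>m\<in>{m\<in>Poly_Mapping.keys (Repr n f).
        \<forall>q. odd q \<and> q \<le> 2 * ((n - 1) div 2) + 1 \<longrightarrow> Poly_Mapping.lookup m q = c q}.
      Const (Poly_Mapping.lookup (Repr n f) m) *
        (\<Prod>e\<in>{e\<in>Poly_Mapping.keys m. even e}. Var e ^ Poly_Mapping.lookup m e))"

definition multiplier :: "nat \<Rightarrow> 'a::comm_semiring_1 mpoly \<Rightarrow> (nat \<Rightarrow> nat) \<Rightarrow> 'a mpoly" where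
  "multiplier n f c = subst (power_sum n) (odd_coeff n f c)"

definition r :: "nat \<Rightarrow> nat \<Rightarrow> 'a::comm_semiring_1 mpoly" where
  "r n k = multiplier n (power_sum n k) (\<lambda>q. if q = 2 * ((n - 1) div 2) + 1 then 1 else 0)"

definition complete_hom :: "nat \<Rightarrow> nat \<Rightarrow> 'a::comm_semiring_1 mpoly" where
  "complete_hom i k = (\<Sum>m\<in>{m :: nat \<Rightarrow>\<^sub>0 nat. Poly_Mapping.keys m \<subseteq> {1..i} \<and>
        (\<Sum>v\<in>Poly_Mapping.keys m. Poly_Mapping.lookup m v) = k}.
      Poly_Mapping.single m 1)"

definition ideal_gen :: "nat \<Rightarrow> 'a::comm_semiring_1 mpoly set \<Rightarrow> 'a mpoly set" where
  "ideal_gen n G = {f. \<exists>c. (\<forall>g\<in>G. vars (c g) \<subseteq> {1..n}) \<and> f = (\<Sum>g\<in>G. c g * g)}"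

definition I_gens :: "nat \<Rightarrow> 'a::comm_semiring_1 mpoly set" where
  "I_gens n = (\<lambda>l. Var (l + n div 2) + Var l) ` {1..n div 2} \<union> (if odd n then {Var n} else {})"

end

(*
  Substituting x_{l+i} := -x_l and x_n := 0 is the identity modulo I, so it suffices to show that
  the two polynomials agree at every mirrored point b = (a, -a, 0). There all odd power sums
  vanish, so r_{(n,N)}(b) is the partial derivative of Repr(p_N) in y_{2j+1}, taken at
  (p_1(b), ..., p_n(b)). Differentiating p_N = Repr(p_N)(p_1, ..., p_n) in each coordinate b_l
  gives the Vandermonde system  sum_m m (d_m Repr(p_N)) b_l^(m-1) = N b_l^(N-1),  whose solution is
  read off from the polynomial of degree < n interpolating N y^(N-1) at the b_l; by Newton
  interpolation in y^2 its coefficients are complete homogeneous polynomials in the a_l^2.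
  That Repr(p_N) is well defined rests on the algebraic independence of p_1, ..., p_n, proved by
  the same Jacobian argument and induction on the degree.
*)

theory Submission
  imports Defs "HOL-Computational_Algebra.Polynomial"
begin

abbreviation keys :: "('a \<Rightarrow>\<^sub>0 'b::zero) \<Rightarrow> 'a set" where "keys \<equiv> Poly_Mapping.keys"
abbreviation lookup :: "('a \<Rightarrow>\<^sub>0 'b::zero) \<Rightarrow> 'a \<Rightarrow> 'b" where "lookup \<equiv> Poly_Mapping.lookup"
abbreviation single :: "'a \<Rightarrow> 'b \<Rightarrow> 'a \<Rightarrow>\<^sub>0 'b::zero" where "single \<equiv> Poly_Mapping.single"

definition mpow :: "(nat \<Rightarrow> 'b::comm_semiring_1) \<Rightarrow> (nat \<Rightarrow>\<^sub>0 nat) \<Rightarrow> 'b" where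
  "mpow a m = (\<Prod>v\<in>keys m. a v ^ lookup m v)"

definition eval_map :: "('a::zero \<Rightarrow> 'b::comm_semiring_1) \<Rightarrow> (nat \<Rightarrow> 'b) \<Rightarrow> 'a mpoly \<Rightarrow> 'b" where
  "eval_map h a p = (\<Sum>m\<in>keys p. h (lookup p m) * mpow a m)"

abbreviation eval :: "(nat \<Rightarrow> 'a::comm_semiring_1) \<Rightarrow> 'a mpoly \<Rightarrow> 'a" where
  "eval \<equiv> eval_map (\<lambda>c. c)"

abbreviation eval_curve :: "(nat \<Rightarrow> 'a::comm_semiring_1 poly) \<Rightarrow> 'a mpoly \<Rightarrow> 'a poly" where
  "eval_curve \<equiv> eval_map (\<lambda>c. [:c:])"

lemma mpow_superset:
  assumes "finite S" "keys m \<subseteq> S"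
  shows "mpow a m = (\<Prod>v\<in>S. a v ^ lookup m v)"
  unfolding mpow_def
  by (rule prod.mono_neutral_left) (use assms in \<open>auto simp: in_keys_iff\<close>)

lemma mpow_zero [simp]: "mpow a 0 = 1"
  by (simp add: mpow_def)

lemma mpow_add: "mpow a (m + m') = mpow a m * mpow a m'"
proof -
  let ?S = "keys m \<union> keys m'"
  have "mpow a (m + m') = (\<Prod>v\<in>?S. a v ^ lookup (m + m') v)"
    by (rule mpow_superset) (use keys_add[of m m'] in auto)
  also have "\<dots> = (\<Prod>v\<in>?S. a v ^ lookup m v) * (\<Prod>v\<in>?S. a v ^ lookup m' v)"
    by (simp add: lookup_add power_add prod.distrib)
  finally show ?thesis
    by (simp add: mpow_superset[symmetric])
qed

lemma mpow_single [simp]: "mpow a (single v k) = a v ^ k"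
  by (simp add: mpow_def)

lemma mpow_cong: "(\<And>v. v \<in> keys m \<Longrightarrow> a v = b v) \<Longrightarrow> mpow a m = mpow b m"
  unfolding mpow_def by (rule prod.cong) auto

lemma mpow_eq_0:
  assumes "v \<in> keys m" "a v = 0"
  shows "mpow a m = (0::'a::comm_semiring_1)"
  unfolding mpow_def using assms by (intro prod_zero bexI[of _ v]) (auto simp: in_keys_iff power_0_left)

lemma const_poly_prod: "[:prod f S:] = (\<Prod>i\<in>S. [:f i:])"
  by (induction S rule: infinite_finite_induct) (simp_all add: mult.commute flip: mult_to_poly)

lemma mpow_const_poly: "mpow (\<lambda>v. [:a v:]) m = [:mpow a m:]"
  by (simp add: mpow_def const_poly_prod poly_const_pow)

lemma poly_mpow: "poly (mpow B m) t = mpow (\<lambda>v. poly (B v) t) m"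
  by (simp add: mpow_def poly_prod)

lemma eval_map_superset:
  assumes "finite S" "keys p \<subseteq> S" "h 0 = 0"
  shows "eval_map h a p = (\<Sum>m\<in>S. h (lookup p m) * mpow a m)"
  unfolding eval_map_def
  by (rule sum.mono_neutral_left) (use assms in \<open>auto simp: in_keys_iff\<close>)

lemma eval_map_zero [simp]: "eval_map h a 0 = 0"
  by (simp add: eval_map_def)

lemma eval_map_single:
  "h 0 = 0 \<Longrightarrow> eval_map h a (single m c) = h c * mpow a m"
  by (simp add: eval_map_def)

lemma eval_map_add:
  assumes "h 0 = 0" "\<And>x y. h (x + y) = h x + h y"
  shows "eval_map h a (p + q) = eval_map h a p + eval_map h a q"
proof -
  let ?S = "keys p \<union> keys q"
  have "eval_map h a (p + q) = (\<Sum>m\<in>?S. h (lookup (p + q) m) * mpow a m)"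
    by (rule eval_map_superset) (use keys_add[of p q] assms in auto)
  also have "\<dots> = (\<Sum>m\<in>?S. h (lookup p m) * mpow a m) + (\<Sum>m\<in>?S. h (lookup q m) * mpow a m)"
    by (simp add: lookup_add assms distrib_right sum.distrib)
  finally show ?thesis
    by (simp add: eval_map_superset[symmetric] assms)
qed

lemma eval_map_sum:
  assumes "h 0 = 0" "\<And>x y. h (x + y) = h x + h y"
  shows "eval_map h a (sum f S) = (\<Sum>i\<in>S. eval_map h a (f i))"
  by (induction S rule: infinite_finite_induct) (simp_all add: eval_map_add[OF assms])

lemma eval_curve_sum: "eval_curve B (sum f S) = (\<Sum>i\<in>S. eval_curve B (f i))"
  by (rule eval_map_sum) auto

lemma eval_single: "eval a (single m c) = c * mpow a m"
  by (rule eval_map_single) simp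

lemma eval_add: "eval a (p + q) = eval a p + eval a q"
  by (rule eval_map_add) auto

lemma eval_sum: "eval a (sum f S) = (\<Sum>i\<in>S. eval a (f i))"
  by (rule eval_map_sum) auto

lemma eval_diff: "eval a (p - q) = eval a p - eval a (q :: 'a::comm_ring_1 mpoly)"
  using eval_add[of a "p - q" q] by (simp add: algebra_simps)

lemma eval_uminus: "eval a (- p) = - eval a (p :: 'a::comm_ring_1 mpoly)"
  using eval_add[of a "- p" p] by (simp add: eq_neg_iff_add_eq_0)

lemma poly_mapping_sum_single: "p = (\<Sum>m\<in>keys p. single m (lookup p m))"
  by (rule poly_mapping_eqI) (simp add: lookup_sum lookup_single when_def in_keys_iff)

lemma eval_mult: "eval a (p * q) = eval a p * eval a (q :: 'a::comm_semiring_1 mpoly)"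
proof -
  have "p * q = (\<Sum>m\<in>keys p. \<Sum>m'\<in>keys q. single (m + m') (lookup p m * lookup q m'))"
    by (subst poly_mapping_sum_single, subst (2) poly_mapping_sum_single)
      (simp add: sum_product mult_single)
  then have "eval a (p * q) = (\<Sum>m\<in>keys p. \<Sum>m'\<in>keys q. (lookup p m * mpow a m) * (lookup q m' * mpow a m'))"
    by (simp add: eval_sum eval_single mpow_add ac_simps)
  then show ?thesis
    by (simp add: eval_map_def sum_product)
qed

lemma eval_Const [simp]: "eval a (Const c) = c"
  by (simp add: Const_def eval_single)

lemma eval_Var [simp]: "eval a (Var v) = a v"
  by (simp add: Var_def eval_single)

lemma eval_one [simp]: "eval a 1 = 1"
  using eval_Const[of a 1] by (simp add: Const_def)

lemma eval_power: "eval a (p ^ k) = eval a p ^ k"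
  by (induction k) (simp_all add: eval_mult)

lemma eval_prod: "eval a (prod f S) = (\<Prod>i\<in>S. eval a (f i))"
  by (induction S rule: infinite_finite_induct) (simp_all add: eval_mult)

lemma eval_subst: "eval a (subst B p) = eval (\<lambda>v. eval a (B v)) p"
  unfolding subst_def eval_sum eval_mult eval_prod eval_power eval_Const
  by (simp add: eval_map_def[where a="\<lambda>v. eval a (B v)"] mpow_def)

lemma poly_eval_curve: "poly (eval_curve B p) t = eval (\<lambda>v. poly (B v) t) p"
  by (simp add: eval_map_def poly_sum poly_mpow)

lemma vars_zero [simp]: "vars 0 = {}"
  by (simp add: vars_def)

lemma vars_Const [simp]: "vars (Const c) = {}"
  by (simp add: vars_def Const_def)

lemma vars_one [simp]: "vars (1 :: 'a::comm_semiring_1 mpoly) = {}"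
  by (simp add: vars_def)

lemma vars_Var: "vars (Var v :: 'a::comm_semiring_1 mpoly) \<subseteq> {v}"
  by (simp add: vars_def Var_def)

lemma vars_single: "vars (single m c) \<subseteq> keys m"
  by (simp add: vars_def)

lemma vars_uminus [simp]: "vars (- p) = vars (p :: 'a::ab_group_add mpoly)"
  by (simp add: vars_def)

lemma vars_add: "vars (p + q) \<subseteq> vars p \<union> vars q"
  unfolding vars_def using keys_add[of p q] by auto

lemma vars_diff: "vars (p - q) \<subseteq> vars p \<union> vars (q :: 'a::ab_group_add mpoly)"
  unfolding vars_def using keys_diff[of p q] by auto

lemma keys_add_nat: "keys (m + m' :: nat \<Rightarrow>\<^sub>0 nat) = keys m \<union> keys m'"
  by (auto simp: in_keys_iff lookup_add)

lemma vars_mult: "vars (p * q) \<subseteq> vars p \<union> vars (q :: 'a::comm_semiring_1 mpoly)"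
proof
  fix v assume "v \<in> vars (p * q)"
  then obtain m where m: "m \<in> keys (p * q)" "v \<in> keys m"
    unfolding vars_def by blast
  then obtain a b where "m = a + b" "a \<in> keys p" "b \<in> keys q"
    using keys_mult[of p q] by blast
  with m show "v \<in> vars p \<union> vars q"
    unfolding vars_def by (auto simp: keys_add_nat)
qed

lemma vars_sum: "vars (sum f S) \<subseteq> (\<Union>i\<in>S. vars (f i))"
  unfolding vars_def using keys_sum[of f S] by blast

lemma vars_prod: "vars (prod f S) \<subseteq> (\<Union>i\<in>S. vars (f i :: 'a::comm_semiring_1 mpoly))"
proof (induction S rule: infinite_finite_induct)
  case (insert x F)
  then show ?case using vars_mult[of "f x" "prod f F"] by auto
qed simp_all

lemma vars_power: "vars (p ^ k) \<subseteq> vars (p :: 'a::comm_semiring_1 mpoly)"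
proof (induction k)
  case (Suc k)
  then show ?case using vars_mult[of p "p ^ k"] by auto
qed simp

lemma vars_subst: "vars (subst B p) \<subseteq> (\<Union>v\<in>vars p. vars (B v))"
proof -
  have "vars (Const (lookup p m) * (\<Prod>v\<in>keys m. B v ^ lookup m v)) \<subseteq> (\<Union>v\<in>vars p. vars (B v))"
    if m: "m \<in> keys p" for m
  proof -
    have "vars (Const (lookup p m) * (\<Prod>v\<in>keys m. B v ^ lookup m v))
        \<subseteq> vars (\<Prod>v\<in>keys m. B v ^ lookup m v)"
      using vars_mult by fastforce
    also have "\<dots> \<subseteq> (\<Union>v\<in>keys m. vars (B v ^ lookup m v))"
      by (rule vars_prod)
    also have "\<dots> \<subseteq> (\<Union>v\<in>keys m. vars (B v))"
      using vars_power by blast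
    also have "\<dots> \<subseteq> (\<Union>v\<in>vars p. vars (B v))"
      using m by (auto simp: vars_def)
    finally show ?thesis .
  qed
  then show ?thesis
    unfolding subst_def by (intro order.trans[OF vars_sum] UN_least)
qed

lemma vars_subst_subset: "(\<And>v. v \<in> vars p \<Longrightarrow> vars (B v) \<subseteq> V) \<Longrightarrow> vars (subst B p) \<subseteq> V"
  using vars_subst[of B p] by blast

section \<open>Polynomials vanishing at generic points\<close>

text \<open>The condition \<open>a l + a l' \<noteq> 0\<close> keeps the coordinates of the mirrored point below distinct.\<close>
definition generic_point :: "nat set \<Rightarrow> (nat \<Rightarrow> 'a::ab_group_add) \<Rightarrow> bool" where
  "generic_point S a \<longleftrightarrow> inj_on a S \<and> (\<forall>l\<in>S. \<forall>l'\<in>S. a l + a l' \<noteq> 0)"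

lemma generic_point_subset: "generic_point S a \<Longrightarrow> T \<subseteq> S \<Longrightarrow> generic_point T a"
  unfolding generic_point_def by (meson inj_on_subset subsetD)

lemma generic_point_fun_upd:
  fixes a :: "nat \<Rightarrow> 'a::{idom, ring_char_0}"
  assumes a: "generic_point (S - {l}) a"
    and t: "t \<notin> insert 0 (a ` (S - {l}) \<union> (\<lambda>v. - a v) ` (S - {l}))"
  shows "generic_point S (a(l := t))"
proof -
  have "t + t \<noteq> 0"
    using t by (simp flip: mult_2)
  moreover have "t \<noteq> a x" "t + a x \<noteq> 0" "a x + t \<noteq> 0" if "x \<in> S - {l}" for x
  proof -
    have "t \<noteq> a x" "t \<noteq> - a x"
      using t that by auto
    then show "t \<noteq> a x" "t + a x \<noteq> 0" "a x + t \<noteq> 0"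
      by (auto simp: add_eq_0_iff2 add_eq_0_iff)
  qed
  ultimately show ?thesis
    using a unfolding generic_point_def inj_on_def by auto
qed

lemma generic_point_of_nat: "generic_point {1..n} (\<lambda>l. of_nat l :: 'a::ring_char_0)"
proof -
  have "(of_nat l + of_nat l' :: 'a) \<noteq> 0" if "1 \<le> l" for l l'
    using that by (simp only: of_nat_add[symmetric] of_nat_eq_0_iff)
  then show ?thesis
    unfolding generic_point_def inj_on_def by auto
qed

lemma poly_eq_0_if_cofinite_roots:
  fixes P :: "'a::field_char_0 poly"
  assumes "finite F" "\<And>t. t \<notin> F \<Longrightarrow> poly P t = 0"
  shows "P = 0"
proof (rule ccontr)
  assume "P \<noteq> 0"
  then have "finite {t. poly P t = 0}"
    by (rule poly_roots_finite)
  moreover have "UNIV - F \<subseteq> {t. poly P t = 0}"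
    using assms(2) by blast
  ultimately have "finite (UNIV :: 'a set)"
    using assms(1) by (metis Diff_infinite_finite finite_subset)
  then show False
    using infinite_UNIV_char_0 by blast
qed

lemma vars_empty_imp_Const:
  assumes "vars p = {}"
  shows "p = Const (lookup p 0)"
proof (rule poly_mapping_eqI)
  fix m
  have "m \<in> keys p \<Longrightarrow> m = 0"
    using assms by (auto simp: vars_def)
  then show "lookup p m = lookup (Const (lookup p 0)) m"
    by (cases "m = 0") (auto simp: Const_def lookup_single in_keys_iff)
qed

lemma monom_split: "(m :: nat \<Rightarrow>\<^sub>0 nat) = (m - single v (lookup m v)) + single v (lookup m v)"
  by (rule poly_mapping_eqI) (simp add: lookup_add lookup_minus lookup_single when_def)

lemma keys_monom_remove: "keys (m - single v (lookup m v) :: nat \<Rightarrow>\<^sub>0 nat) = keys m - {v}"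
  by (auto simp: in_keys_iff lookup_minus lookup_single when_def split: if_splits)

definition var_coeff :: "nat \<Rightarrow> nat \<Rightarrow> 'a::comm_semiring_1 mpoly \<Rightarrow> 'a mpoly" where
  "var_coeff v d p = (\<Sum>m\<in>{m\<in>keys p. lookup m v = d}. single (m - single v d) (lookup p m))"

lemma vars_var_coeff: "vars (var_coeff v d p) \<subseteq> vars p - {v}"
proof -
  have "vars (single (m - single v d) (lookup p m)) \<subseteq> vars p - {v}"
    if "m \<in> {m\<in>keys p. lookup m v = d}" for m
    using that vars_single[of "m - single v d" "lookup p m"] keys_monom_remove[of m v]
    unfolding vars_def by auto
  then show ?thesis
    unfolding var_coeff_def by (intro order.trans[OF vars_sum] UN_least)
qed

lemma lookup_var_coeff:
  assumes "m \<in> keys p"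
  shows "lookup (var_coeff v (lookup m v) p) (m - single v (lookup m v)) = lookup p m"
proof -
  let ?d = "lookup m v"
  have "m' = m" if "lookup m' v = ?d" "m' - single v ?d = m - single v ?d" for m'
    using monom_split[of m' v] monom_split[of m v] that by metis
  then have "lookup (var_coeff v ?d p) (m - single v ?d)
      = (\<Sum>m'\<in>{m'\<in>keys p. lookup m' v = ?d}. if m' = m then lookup p m else 0)"
    unfolding var_coeff_def lookup_sum lookup_single by (intro sum.cong refl) (auto simp: when_def)
  also have "\<dots> = lookup p m"
    using assms by (simp add: sum.delta)
  finally show ?thesis .
qed

lemma coeff_eval_curve_var_coeff:
  fixes p :: "'a::comm_ring_1 mpoly"
  assumes "\<And>w. w \<noteq> v \<Longrightarrow> B w = [:a w:]" "B v = [:0, 1:]"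
  shows "coeff (eval_curve B p) d = eval a (var_coeff v d p)"
proof -
  have B: "mpow B m = monom (mpow a (m - single v (lookup m v))) (lookup m v)" for m
  proof -
    have "mpow B m = mpow B (m - single v (lookup m v)) * mpow B (single v (lookup m v))"
      by (subst monom_split[of m v]) (simp add: mpow_add)
    also have "mpow B (m - single v (lookup m v)) = mpow (\<lambda>w. [:a w:]) (m - single v (lookup m v))"
      by (rule mpow_cong) (use assms keys_monom_remove in auto)
    finally show ?thesis
      by (simp add: assms mpow_const_poly monom_altdef)
  qed
  have "coeff (eval_curve B p) d
      = (\<Sum>m\<in>keys p. lookup p m * (if lookup m v = d then mpow a (m - single v d) else 0))"
    by (simp add: eval_map_def coeff_sum B coeff_monom) (intro sum.cong refl, auto)
  also have "\<dots> = (\<Sum>m\<in>{m\<in>keys p. lookup m v = d}. lookup p m * mpow a (m - single v d))"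
    by (simp add: sum.inter_filter[symmetric] if_distrib cong: if_cong)
  finally show ?thesis
    by (simp add: var_coeff_def eval_sum eval_single)
qed

text \<open>Induction on the number of variables: the coefficients of \<open>p\<close> in its last variable vanish at
  generic points, since on a line through a generic point only finitely many points are not generic.\<close>
lemma mpoly_eq_0_if_vanishes_on_generic:
  fixes p :: "'a::field_char_0 mpoly"
  assumes "vars p \<subseteq> {1..N}" "\<And>a. generic_point {1..N} a \<Longrightarrow> eval a p = 0"
  shows "p = 0"
  using assms
proof (induction N arbitrary: p)
  case 0
  then have "p = Const (lookup p 0)"
    by (intro vars_empty_imp_Const) auto
  moreover have "eval (\<lambda>_. 0) p = 0"
    by (rule "0.prems"(2)) (simp add: generic_point_def)
  ultimately show ?case
    by (metis eval_Const Const_def single_zero)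
next
  case (Suc N)
  let ?v = "Suc N"
  have "var_coeff ?v d p = 0" for d
  proof (rule Suc.IH)
    show "vars (var_coeff ?v d p) \<subseteq> {1..N}"
      using vars_var_coeff[of ?v d p] Suc.prems(1) by fastforce
  next
    fix a :: "nat \<Rightarrow> 'a" assume a: "generic_point {1..N} a"
    define B where "B w = (if w = ?v then [:0, 1:] else [:a w:])" for w
    let ?F = "insert 0 (a ` {1..N} \<union> (\<lambda>l. - a l) ` {1..N})"
    have "eval_curve B p = 0"
    proof (rule poly_eq_0_if_cofinite_roots)
      fix t assume "t \<notin> ?F"
      then have "generic_point {1..?v} (a(?v := t))"
        using a by (intro generic_point_fun_upd) (simp_all add: atLeastAtMostSuc_conv)
      moreover have "(\<lambda>w. poly (B w) t) = a(?v := t)"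
        by (auto simp: B_def)
      ultimately show "poly (eval_curve B p) t = 0"
        using Suc.prems(2) by (simp add: poly_eval_curve)
    qed simp
    then show "eval a (var_coeff ?v d p) = 0"
      using coeff_eval_curve_var_coeff[of ?v B a p d] by (simp add: B_def)
  qed
  then show ?case
    using lookup_var_coeff[of _ p ?v] by (metis lookup_zero in_keys_iff keys_eq_empty ex_in_conv)
qed

definition pdiff :: "nat \<Rightarrow> 'a::comm_semiring_1 mpoly \<Rightarrow> 'a mpoly" where
  "pdiff v p = (\<Sum>m\<in>keys p. single (m - single v 1) (lookup p m * of_nat (lookup m v)))"

lemma keys_diff_single: "keys (m - single v k :: nat \<Rightarrow>\<^sub>0 nat) \<subseteq> keys m"
  by (auto simp: in_keys_iff lookup_minus)

lemma monom_split_single: "v \<in> keys m \<Longrightarrow> (m :: nat \<Rightarrow>\<^sub>0 nat) = (m - single v 1) + single v 1"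
  by (rule poly_mapping_eqI) (auto simp: lookup_add lookup_minus lookup_single when_def in_keys_iff)

lemma vars_pdiff: "vars (pdiff v p) \<subseteq> vars p"
proof -
  have "vars (single (m - single v 1) (lookup p m * of_nat (lookup m v))) \<subseteq> vars p"
    if "m \<in> keys p" for m
    using that vars_single keys_diff_single unfolding vars_def by fastforce
  then show ?thesis
    unfolding pdiff_def by (intro order.trans[OF vars_sum] UN_least)
qed

lemma eval_pdiff:
  "eval a (pdiff v p) = (\<Sum>m\<in>keys p. lookup p m * of_nat (lookup m v) * mpow a (m - single v 1))"
  by (simp add: pdiff_def eval_sum eval_single)

lemma lookup_pdiff:
  assumes "v \<in> keys m"
  shows "lookup (pdiff v p) (m - single v 1) = lookup p m * of_nat (lookup m v)"
proof -
  have "(lookup p m' * of_nat (lookup m' v) when m' - single v 1 = m - single v 1)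
      = (if m' = m then lookup p m * of_nat (lookup m v) else 0)" for m'
  proof (cases "v \<in> keys m'")
    case True
    then show ?thesis
      using monom_split_single[OF assms] monom_split_single[OF True] by (auto simp: when_def)
  qed (auto simp: in_keys_iff when_def)
  then show ?thesis
    unfolding pdiff_def lookup_sum lookup_single by (simp add: sum.delta in_keys_iff)
qed

lemma notin_vars_if_pdiff_eq_0:
  fixes p :: "'a::{comm_semiring_1, semiring_no_zero_divisors, semiring_char_0} mpoly"
  assumes "pdiff v p = 0"
  shows "v \<notin> vars p"
proof
  assume "v \<in> vars p"
  then obtain m where "m \<in> keys p" "v \<in> keys m"
    unfolding vars_def by blast
  then show False
    using lookup_pdiff[of v m p] assms by (simp add: in_keys_iff)
qed

lemma pderiv_sum: "pderiv (sum f S) = (\<Sum>i\<in>S. pderiv (f i))"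
  by (induction S rule: infinite_finite_induct) (simp_all add: pderiv_add)

lemma pderiv_mpow:
  "pderiv (mpow B m) = (\<Sum>w\<in>keys m. [:of_nat (lookup m w):] * mpow B (m - single w 1) * pderiv (B w))"
proof -
  have "(\<Prod>w'\<in>keys m - {w}. B w' ^ lookup m w') * pderiv (B w ^ lookup m w)
      = [:of_nat (lookup m w):] * mpow B (m - single w 1) * pderiv (B w)"
    if w: "w \<in> keys m" for w
  proof -
    obtain e where e: "lookup m w = Suc e"
      using w by (metis in_keys_iff not0_implies_Suc)
    have "mpow B (m - single w 1) = (\<Prod>w'\<in>keys m. B w' ^ lookup (m - single w 1) w')"
      by (rule mpow_superset) (auto simp: keys_diff_single)
    also have "\<dots> = B w ^ lookup (m - single w 1) w * (\<Prod>w'\<in>keys m - {w}. B w' ^ lookup (m - single w 1) w')"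
      using w by (simp add: prod.remove)
    also have "(\<Prod>w'\<in>keys m - {w}. B w' ^ lookup (m - single w 1) w') = (\<Prod>w'\<in>keys m - {w}. B w' ^ lookup m w')"
      by (rule prod.cong) (auto simp: lookup_minus lookup_single)
    finally have "mpow B (m - single w 1) = B w ^ e * (\<Prod>w'\<in>keys m - {w}. B w' ^ lookup m w')"
      by (simp add: lookup_minus e)
    then show ?thesis
      by (simp only: e pderiv_power_Suc) (simp add: ac_simps)
  qed
  then show ?thesis
    unfolding mpow_def[of B m] pderiv_prod by (intro sum.cong refl)
qed

lemma pderiv_eval_curve:
  assumes "vars p \<subseteq> V" "finite V"
  shows "pderiv (eval_curve B p) = (\<Sum>w\<in>V. eval_curve B (pdiff w p) * pderiv (B w))"
proof -
  have "pderiv (eval_curve B p) = (\<Sum>m\<in>keys p. [:lookup p m:] * pderiv (mpow B m))"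
    by (simp add: eval_map_def pderiv_sum pderiv_smult)
  also have "\<dots> = (\<Sum>m\<in>keys p. \<Sum>w\<in>keys m.
      [:lookup p m * of_nat (lookup m w):] * mpow B (m - single w 1) * pderiv (B w))"
    unfolding pderiv_mpow sum_distrib_left
    by (intro sum.cong refl) (simp only: mult_to_poly[symmetric] mult.assoc)
  also have "\<dots> = (\<Sum>m\<in>keys p. \<Sum>w\<in>V.
      [:lookup p m * of_nat (lookup m w):] * mpow B (m - single w 1) * pderiv (B w))"
  proof (rule sum.cong[OF refl], rule sum.mono_neutral_left)
    fix m assume "m \<in> keys p"
    then show "keys m \<subseteq> V"
      using assms(1) unfolding vars_def by auto
  qed (auto simp: assms in_keys_iff)
  also have "\<dots> = (\<Sum>w\<in>V. eval_curve B (pdiff w p) * pderiv (B w))"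
    by (subst sum.swap) (simp add: pdiff_def eval_curve_sum eval_map_single sum_distrib_right)
  finally show ?thesis .
qed

definition monom_degree :: "(nat \<Rightarrow>\<^sub>0 nat) \<Rightarrow> nat" where
  "monom_degree m = sum (lookup m) (keys m)"

definition total_degree :: "'a::zero mpoly \<Rightarrow> nat" where
  "total_degree p = Max (insert 0 (monom_degree ` keys p))"

lemma monom_degree_superset:
  "finite S \<Longrightarrow> keys m \<subseteq> S \<Longrightarrow> monom_degree m = sum (lookup m) S"
  unfolding monom_degree_def by (rule sum.mono_neutral_left) (auto simp: in_keys_iff)

lemma monom_degree_add: "monom_degree (m + m') = monom_degree m + monom_degree m'"
proof -
  let ?S = "keys m \<union> keys m'"
  have "monom_degree (m + m') = sum (lookup (m + m')) ?S"
    by (rule monom_degree_superset) (auto simp: keys_add_nat)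
  also have "\<dots> = sum (lookup m) ?S + sum (lookup m') ?S"
    by (simp add: lookup_add sum.distrib)
  finally show ?thesis
    by (simp add: monom_degree_superset[symmetric])
qed

lemma monom_degree_single [simp]: "monom_degree (single v d) = d"
  by (simp add: monom_degree_def)

lemma total_degree_pdiff_less:
  assumes "pdiff v p \<noteq> 0"
  shows "total_degree (pdiff v p) < total_degree p"
proof -
  have "monom_degree m' < total_degree p" if "m' \<in> keys (pdiff v p)" for m'
  proof -
    have "m' \<in> (\<Union>m\<in>keys p. keys (single (m - single v 1) (lookup p m * of_nat (lookup m v))))"
      using keys_sum[of _ "keys p"] that unfolding pdiff_def by (rule subsetD)
    then obtain m where m: "m \<in> keys p" "m' = m - single v 1" "lookup p m * of_nat (lookup m v) \<noteq> 0"
      by (auto split: if_splits)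
    then have "v \<in> keys m"
      by (metis in_keys_iff mult_zero_right of_nat_0)
    then have "m = m' + single v 1"
      unfolding m(2) by (rule monom_split_single)
    then have "monom_degree m' < monom_degree m"
      by (simp add: monom_degree_add)
    also have "\<dots> \<le> total_degree p"
      using m(1) unfolding total_degree_def by (intro Max_ge) auto
    finally show ?thesis .
  qed
  moreover obtain m' where "m' \<in> keys (pdiff v p)"
    using assms by (metis keys_eq_empty ex_in_conv)
  ultimately show ?thesis
    unfolding total_degree_def[of "pdiff v p"] by (subst Max_less_iff) (auto intro: le_less_trans)
qed

section \<open>Algebraic independence of the power sums\<close>

definition psum :: "nat \<Rightarrow> (nat \<Rightarrow> 'a::comm_semiring_1) \<Rightarrow> nat \<Rightarrow> 'a" where
  "psum n a k = (\<Sum>l\<in>{1..n}. a l ^ k)"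

lemma eval_power_sum: "eval a (power_sum n k) = psum n a k"
  by (simp add: power_sum_def psum_def eval_sum eval_power)

lemma vars_power_sum: "vars (power_sum n k :: 'a::comm_semiring_1 mpoly) \<subseteq> {1..n}"
proof -
  have "vars (Var l ^ k :: 'a mpoly) \<subseteq> {1..n}" if "l \<in> {1..n}" for l
    using that vars_power[of "Var l" k] vars_Var[of l] by auto
  then show ?thesis
    unfolding power_sum_def by (intro order.trans[OF vars_sum] UN_least)
qed

lemma eval_subst_power_sum: "eval a (subst (power_sum n) q) = eval (psum n a) q"
  by (simp add: eval_subst eval_power_sum)

lemma vars_subst_power_sum: "vars (subst (power_sum n) q :: 'a::comm_semiring_1 mpoly) \<subseteq> {1..n}"
  using vars_subst[of "power_sum n" q] vars_power_sum[of n] by blast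

lemma poly_pderiv_shifted_power_sum:
  fixes a :: "nat \<Rightarrow> 'a::idom"
  assumes "l \<in> {1..n}" "1 \<le> m"
  shows "poly (pderiv (\<Sum>v\<in>{1..n}. [:a v, if v = l then 1 else 0:] ^ m)) 0 = of_nat m * a l ^ (m - 1)"
proof -
  obtain m' where m': "m = Suc m'"
    using assms(2) by (cases m) auto
  have "poly (pderiv (\<Sum>v\<in>{1..n}. [:a v, if v = l then 1 else 0:] ^ m)) 0
      = (\<Sum>v\<in>{1..n}. of_nat m * a v ^ m' * (if v = l then 1 else 0))"
    unfolding pderiv_sum m' pderiv_power_Suc poly_sum
    by (intro sum.cong refl) (simp add: pderiv_pCons)
  also have "\<dots> = of_nat m * a l ^ (m - 1)"
    using assms(1) by (simp add: m' if_distrib sum.delta cong: if_cong)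
  finally show ?thesis .
qed

text \<open>Chain rule for \<open>C(t) = Q(p\<^sub>1(a + t e\<^sub>l), \<dots>, p\<^sub>n(a + t e\<^sub>l))\<close> at \<open>t = 0\<close>.\<close>
lemma pderiv_power_sums_along_axis:
  fixes Q :: "'a::field_char_0 mpoly"
  assumes "vars Q \<subseteq> {1..n}" "l \<in> {1..n}" "finite T"
    "\<And>t. t \<notin> T \<Longrightarrow> eval (psum n (a(l := a l + t))) Q = poly C t"
  shows "poly (pderiv C) 0 = (\<Sum>m\<in>{1..n}. eval (psum n a) (pdiff m Q) * (of_nat m * a l ^ (m - 1)))"
proof -
  define B where "B m = (\<Sum>v\<in>{1..n}. [:a v, if v = l then 1 else 0:] ^ m)" for m
  have B: "poly (B m) t = psum n (a(l := a l + t)) m" for m t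
    unfolding B_def psum_def poly_sum poly_power by (intro sum.cong refl) auto
  have "eval_curve B Q - C = 0"
  proof (rule poly_eq_0_if_cofinite_roots[OF assms(3)])
    fix t assume "t \<notin> T"
    then show "poly (eval_curve B Q - C) t = 0"
      using assms(4) by (simp add: poly_eval_curve B[abs_def])
  qed
  then have "pderiv C = (\<Sum>m\<in>{1..n}. eval_curve B (pdiff m Q) * pderiv (B m))"
    using pderiv_eval_curve[OF assms(1), of B] by simp
  moreover have "(\<lambda>m. poly (B m) 0) = psum n a"
    using B[of _ 0] by (auto simp: fun_upd_idem)
  moreover have "poly (pderiv (B m)) 0 = of_nat m * a l ^ (m - 1)" if "m \<in> {1..n}" for m
    using that assms(2) unfolding B_def by (intro poly_pderiv_shifted_power_sum) auto
  ultimately show ?thesis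
    by (simp add: poly_sum poly_eval_curve)
qed

lemma coeff_eq_if_interpolates:
  fixes c :: "nat \<Rightarrow> 'a::idom"
  assumes "inj_on a {1..n}" "degree S < n"
    and "\<And>l. l \<in> {1..n} \<Longrightarrow> (\<Sum>m\<in>{1..n}. c m * a l ^ (m - 1)) = poly S (a l)"
    and "m \<in> {1..n}"
  shows "c m = coeff S (m - 1)"
proof -
  define P where "P = (\<Sum>m\<in>{1..n}. monom (c m) (m - 1))"
  have "degree (monom (c m) (m - 1)) < n" if "m \<in> {1..n}" for m
    using that by (intro le_less_trans[OF degree_monom_le]) auto
  then have "degree P < n"
    unfolding P_def using assms(4) by (intro degree_sum_less) auto
  have "P = S"
  proof (rule poly_eqI_degree)
    fix x assume "x \<in> a ` {1..n}"
    then show "poly P x = poly S x"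
      using assms(3) by (auto simp: P_def poly_sum poly_monom)
  next
    have "card (a ` {1..n}) = n"
      using assms(1) by (simp add: card_image)
    then show "degree P < card (a ` {1..n})" "degree S < card (a ` {1..n})"
      using \<open>degree P < n\<close> assms(2) by simp_all
  qed
  have "coeff P (m - 1) = (\<Sum>m'\<in>{1..n}. if m' = m then c m' else 0)"
    unfolding P_def coeff_sum coeff_monom using assms(4) by (intro sum.cong refl) auto
  with \<open>P = S\<close> show ?thesis
    using assms(4) by simp
qed

lemma generic_point_shift:
  fixes a :: "nat \<Rightarrow> 'a::{idom, ring_char_0}"
  assumes "generic_point S a" "finite S" "l \<in> S"
  obtains T where "finite T" "\<And>t. t \<notin> T \<Longrightarrow> generic_point S (a(l := a l + t))"
proof
  let ?F = "insert 0 (a ` (S - {l}) \<union> (\<lambda>v. - a v) ` (S - {l}))"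
  show "finite ((\<lambda>s. s - a l) ` ?F)"
    using assms(2) by simp
  fix t assume "t \<notin> (\<lambda>s. s - a l) ` ?F"
  then have "a l + t \<notin> ?F"
    by (metis add_diff_cancel_left' image_eqI)
  then show "generic_point S (a(l := a l + t))"
    using generic_point_subset[OF assms(1), of "S - {l}"] by (intro generic_point_fun_upd) auto
qed

lemma pdiff_power_sums_eq_0_if_vanishes:
  fixes Q :: "'a::field_char_0 mpoly"
  assumes "vars Q \<subseteq> {1..n}" "\<And>a. generic_point {1..n} a \<Longrightarrow> eval (psum n a) Q = 0"
    and "generic_point {1..n} a" "m \<in> {1..n}"
  shows "eval (psum n a) (pdiff m Q) = 0"
proof -
  have "eval (psum n a) (pdiff m Q) * of_nat m = coeff 0 (m - 1)"
  proof (rule coeff_eq_if_interpolates[where c="\<lambda>m. eval (psum n a) (pdiff m Q) * of_nat m"])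
    show "inj_on a {1..n}"
      using assms(3) unfolding generic_point_def by blast
  next
    fix l assume l: "l \<in> {1..n}"
    obtain T where "finite T" "\<And>t. t \<notin> T \<Longrightarrow> generic_point {1..n} (a(l := a l + t))"
      using generic_point_shift[OF assms(3) _ l] by auto
    then have "poly (pderiv 0) 0 = (\<Sum>m\<in>{1..n}. eval (psum n a) (pdiff m Q) * (of_nat m * a l ^ (m - 1)))"
      using assms(2) by (intro pderiv_power_sums_along_axis[OF assms(1) l]) auto
    then show "(\<Sum>m\<in>{1..n}. eval (psum n a) (pdiff m Q) * of_nat m * a l ^ (m - 1)) = poly 0 (a l)"
      by (simp add: mult.assoc)
  qed (use assms(4) in auto)
  then show ?thesis
    using assms(4) by simp
qed

text \<open>If \<open>Q(p\<^sub>1, \<dots>, p\<^sub>n)\<close> vanishes, so do all \<open>(\<partial>\<^sub>m Q)(p\<^sub>1, \<dots>, p\<^sub>n)\<close> by the Jacobian argument above;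
  these have smaller degree, hence vanish identically, and \<open>Q\<close> is a constant.\<close>
theorem power_sums_algebraically_independent:
  fixes Q :: "'a::field_char_0 mpoly"
  assumes "vars Q \<subseteq> {1..n}" "\<And>a. generic_point {1..n} a \<Longrightarrow> eval (psum n a) Q = 0"
  shows "Q = 0"
  using assms
proof (induction "total_degree Q" arbitrary: Q rule: less_induct)
  case less
  have "pdiff v Q = 0" if v: "v \<in> vars Q" for v
  proof (rule ccontr)
    assume ne: "pdiff v Q \<noteq> 0"
    have "pdiff v Q = 0"
    proof (rule less.hyps[OF total_degree_pdiff_less[OF ne]])
      show "vars (pdiff v Q) \<subseteq> {1..n}"
        using vars_pdiff[of v Q] less.prems(1) by auto
      show "eval (psum n a) (pdiff v Q) = 0" if "generic_point {1..n} a" for a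
        using pdiff_power_sums_eq_0_if_vanishes[OF less.prems that] v less.prems(1) by auto
    qed
    with ne show False
      by contradiction
  qed
  then have "vars Q = {}"
    using notin_vars_if_pdiff_eq_0 by blast
  then have "Q = Const (lookup Q 0)"
    by (rule vars_empty_imp_Const)
  moreover have "eval (psum n of_nat) Q = 0"
    by (rule less.prems(2)[OF generic_point_of_nat])
  ultimately show "Q = 0"
    by (metis eval_Const Const_def single_zero)
qed

section \<open>Newton's identities\<close>

lemma coeff_linear_quotient:
  fixes Q :: "'a::idom poly"
  assumes E: "E = [:-c, 1:] * Q" and "degree E \<le> K"
  shows "coeff Q s = (\<Sum>m\<in>{Suc s..K}. coeff E m * c ^ (m - Suc s))"
proof (induction "K - s" arbitrary: s rule: less_induct)
  case less
  show ?case
  proof (cases "K \<le> s")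
    case True
    have "coeff Q s = 0"
    proof (cases "Q = 0")
      case False
      then have "degree E = Suc (degree Q)"
        unfolding E by (subst degree_mult_eq) simp_all
      then show ?thesis
        using assms(2) True by (intro coeff_eq_0) simp
    qed simp
    then show ?thesis
      using True by simp
  next
    case False
    have IH: "coeff Q (Suc s) = (\<Sum>m\<in>{Suc (Suc s)..K}. coeff E m * c ^ (m - Suc (Suc s)))"
      using False by (intro less.hyps) auto
    have "c * coeff E m * c ^ (m - Suc (Suc s)) = coeff E m * c ^ (m - Suc s)"
      if "m \<in> {Suc (Suc s)..K}" for m
    proof -
      have "m - Suc s = Suc (m - Suc (Suc s))"
        using that by (simp add: Suc_diff_Suc)
      then show ?thesis
        by (simp only: power_Suc mult.assoc mult.left_commute)
    qed
    then have "c * coeff Q (Suc s) = (\<Sum>m\<in>{Suc (Suc s)..K}. coeff E m * c ^ (m - Suc s))"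
      unfolding IH sum_distrib_left mult.assoc[symmetric] by (rule sum.cong[OF refl])
    moreover have "{Suc s..K} = insert (Suc s) {Suc (Suc s)..K}"
      using False by auto
    moreover have "coeff Q s = coeff E (Suc s) + c * coeff Q (Suc s)"
      unfolding E by (simp add: mult_pCons_left)
    ultimately show ?thesis
      by simp
  qed
qed

definition root_poly :: "nat \<Rightarrow> (nat \<Rightarrow> 'a::comm_ring_1) \<Rightarrow> 'a poly" where
  "root_poly n a = (\<Prod>l\<in>{1..n}. [:- a l, 1:])"

lemma degree_root_poly [simp]: "degree (root_poly n (a :: nat \<Rightarrow> 'a::idom)) = n"
  unfolding root_poly_def by (subst degree_prod_eq_sum_degree) auto

lemma lead_coeff_root_poly: "coeff (root_poly n (a :: nat \<Rightarrow> 'a::idom)) n = 1"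
  using lead_coeff_prod[of "\<lambda>l. [:- a l, 1:]" "{1..n}"] degree_root_poly[of n a]
  by (simp add: root_poly_def)

lemma newton_identity_high:
  fixes a :: "nat \<Rightarrow> 'a::idom"
  shows "(\<Sum>m\<le>n. coeff (root_poly n a) m * psum n a (K + m)) = 0"
proof -
  have "(\<Sum>m\<le>n. coeff (root_poly n a) m * psum n a (K + m))
      = (\<Sum>l\<in>{1..n}. a l ^ K * (\<Sum>m\<le>n. coeff (root_poly n a) m * a l ^ m))"
    unfolding psum_def sum_distrib_left
    by (subst sum.swap) (intro sum.cong refl, simp add: power_add ac_simps)
  also have "\<dots> = (\<Sum>l\<in>{1..n}. a l ^ K * poly (root_poly n a) (a l))"
    by (simp add: poly_altdef)
  also have "\<dots> = 0"
  proof (rule sum.neutral, rule ballI)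
    fix l assume "l \<in> {1..n}"
    then have "poly (root_poly n a) (a l) = 0"
      unfolding root_poly_def poly_prod by (intro prod_zero) auto
    then show "a l ^ K * poly (root_poly n a) (a l) = 0"
      by simp
  qed
  finally show ?thesis .
qed

lemma newton_identity_pderiv:
  fixes a :: "nat \<Rightarrow> 'a::idom"
  assumes "1 \<le> d"
  shows "of_nat d * coeff (root_poly n a) d = (\<Sum>m\<in>{d..n}. coeff (root_poly n a) m * psum n a (m - d))"
proof -
  define Q where "Q l = (\<Prod>l'\<in>{1..n} - {l}. [:- a l', 1:])" for l
  have "pderiv (root_poly n a) = (\<Sum>l\<in>{1..n}. Q l)"
    unfolding root_poly_def Q_def pderiv_prod by (simp add: pderiv_pCons)
  then have "of_nat d * coeff (root_poly n a) d = (\<Sum>l\<in>{1..n}. coeff (Q l) (d - 1))"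
    using coeff_pderiv[of "root_poly n a" "d - 1"] assms by (simp add: coeff_sum)
  also have "\<dots> = (\<Sum>l\<in>{1..n}. \<Sum>m\<in>{d..n}. coeff (root_poly n a) m * a l ^ (m - d))"
  proof (rule sum.cong[OF refl])
    fix l assume "l \<in> {1..n}"
    then have "root_poly n a = [:- a l, 1:] * Q l"
      unfolding root_poly_def Q_def by (simp add: prod.remove)
    from coeff_linear_quotient[OF this, of n "d - 1"]
    show "coeff (Q l) (d - 1) = (\<Sum>m\<in>{d..n}. coeff (root_poly n a) m * a l ^ (m - d))"
      using assms by simp
  qed
  also have "\<dots> = (\<Sum>m\<in>{d..n}. coeff (root_poly n a) m * psum n a (m - d))"
    unfolding psum_def sum_distrib_left by (rule sum.swap)
  finally show ?thesis .
qed

lemma newton_identity: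
  fixes a :: "nat \<Rightarrow> 'a::idom"
  assumes "d \<le> n"
  shows "of_nat d * coeff (root_poly n a) d
    = of_nat n * coeff (root_poly n a) d + (\<Sum>m\<in>{Suc d..n}. coeff (root_poly n a) m * psum n a (m - d))"
proof (cases "d = 0")
  case True
  have "{..n} = insert 0 {1..n}"
    by auto
  then show ?thesis
    using True newton_identity_high[of n a 0] by (simp add: psum_def mult.commute)
next
  case False
  then have "{d..n} = insert d {Suc d..n}"
    using assms by auto
  then show ?thesis
    using False newton_identity_pderiv[of d n a] by (simp add: psum_def)
qed

definition psum_polynomial :: "nat \<Rightarrow> ((nat \<Rightarrow> 'a::comm_ring_1) \<Rightarrow> 'a) \<Rightarrow> bool" where
  "psum_polynomial n f \<longleftrightarrow> (\<exists>q. vars q \<subseteq> {1..n} \<and> (\<forall>a. eval (psum n a) q = f a))"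

lemma psum_polynomial_const: "psum_polynomial n (\<lambda>a. c)"
  unfolding psum_polynomial_def by (intro exI[of _ "Const c"]) simp

lemma psum_polynomial_add:
  assumes "psum_polynomial n f" "psum_polynomial n g"
  shows "psum_polynomial n (\<lambda>a. f a + g a)"
proof -
  obtain q q' where "vars q \<subseteq> {1..n}" "\<And>a. eval (psum n a) q = f a"
    "vars q' \<subseteq> {1..n}" "\<And>a. eval (psum n a) q' = g a"
    using assms unfolding psum_polynomial_def by blast
  then show ?thesis
    unfolding psum_polynomial_def using vars_add[of q q']
    by (intro exI[of _ "q + q'"]) (auto simp: eval_add)
qed

lemma psum_polynomial_mult:
  assumes "psum_polynomial n f" "psum_polynomial n g"
  shows "psum_polynomial n (\<lambda>a. f a * g a)"
proof -
  obtain q q' where "vars q \<subseteq> {1..n}" "\<And>a. eval (psum n a) q = f a"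
    "vars q' \<subseteq> {1..n}" "\<And>a. eval (psum n a) q' = g a"
    using assms unfolding psum_polynomial_def by blast
  then show ?thesis
    unfolding psum_polynomial_def using vars_mult[of q q']
    by (intro exI[of _ "q * q'"]) (auto simp: eval_mult)
qed

lemma psum_polynomial_sum:
  "(\<And>i. i \<in> S \<Longrightarrow> psum_polynomial n (f i)) \<Longrightarrow> psum_polynomial n (\<lambda>a. \<Sum>i\<in>S. f i a)"
  by (induction S rule: infinite_finite_induct) (simp_all add: psum_polynomial_const psum_polynomial_add)

lemma psum_polynomial_psum_le: "k \<le> n \<Longrightarrow> psum_polynomial n (\<lambda>a. psum n a k)"
proof (cases "k = 0")
  case True
  then show ?thesis
    using psum_polynomial_const[of n "of_nat n"] by (simp add: psum_def)
next
  case False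
  assume "k \<le> n"
  then show ?thesis
    unfolding psum_polynomial_def using False vars_Var[of k] by (intro exI[of _ "Var k"]) auto
qed

lemma psum_polynomial_coeff_root_poly:
  "psum_polynomial n (\<lambda>a::nat \<Rightarrow> 'a::field_char_0. coeff (root_poly n a) d)"
proof (induction "n - d" arbitrary: d rule: less_induct)
  case less
  consider "n < d" | "d = n" | "d < n"
    by linarith
  then show ?case
  proof cases
    case 1
    then show ?thesis
      using psum_polynomial_const[of n 0] by (simp add: coeff_eq_0)
  next
    case 2
    then show ?thesis
      using psum_polynomial_const[of n 1] by (simp add: lead_coeff_root_poly)
  next
    case 3
    have "coeff (root_poly n a) d
        = (\<Sum>m\<in>{Suc d..n}. coeff (root_poly n a) m * psum n a (m - d)) * (1 / (of_nat d - of_nat n))"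
      for a :: "nat \<Rightarrow> 'a"
      using newton_identity[of d n a] 3 by (simp add: field_simps)
    moreover have "psum_polynomial n (\<lambda>a::nat \<Rightarrow> 'a.
        (\<Sum>m\<in>{Suc d..n}. coeff (root_poly n a) m * psum n a (m - d)) * (1 / (of_nat d - of_nat n)))"
      using 3 by (intro psum_polynomial_mult psum_polynomial_sum psum_polynomial_const
          less.hyps psum_polynomial_psum_le) auto
    ultimately show ?thesis
      by simp
  qed
qed

lemma psum_polynomial_psum: "psum_polynomial n (\<lambda>a::nat \<Rightarrow> 'a::field_char_0. psum n a N)"
proof (induction N rule: less_induct)
  case (less N)
  show ?case
  proof (cases "N \<le> n")
    case True
    then show ?thesis
      by (rule psum_polynomial_psum_le)
  next
    case False
    have "psum n a N = (\<Sum>m<n. coeff (root_poly n a) m * psum n a (N - n + m)) * (- 1)"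
      for a :: "nat \<Rightarrow> 'a"
      using newton_identity_high[of n a "N - n"] False
      by (simp add: lessThan_Suc_atMost[symmetric] lead_coeff_root_poly add_eq_0_iff)
    moreover have "psum_polynomial n (\<lambda>a::nat \<Rightarrow> 'a.
        (\<Sum>m<n. coeff (root_poly n a) m * psum n a (N - n + m)) * (- 1))"
      using False by (intro psum_polynomial_mult psum_polynomial_sum psum_polynomial_const
          psum_polynomial_coeff_root_poly less.IH) auto
    ultimately show ?thesis
      by simp
  qed
qed

lemma Repr_power_sum:
  fixes n N :: nat
  defines "Q \<equiv> Repr n (power_sum n N :: 'a::field_char_0 mpoly)"
  shows "vars Q \<subseteq> {1..n}" "eval (psum n a) Q = psum n a N"
proof -
  obtain q :: "'a mpoly" where q: "vars q \<subseteq> {1..n}" "\<And>a. eval (psum n a) q = psum n a N"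
    using psum_polynomial_psum[of n N] unfolding psum_polynomial_def by blast
  have "subst (power_sum n) q - power_sum n N = 0"
  proof (rule mpoly_eq_0_if_vanishes_on_generic)
    show "vars (subst (power_sum n) q - power_sum n N) \<subseteq> {1..n}"
      using vars_diff[of "subst (power_sum n) q" "power_sum n N"] vars_subst_power_sum[of n q]
        vars_power_sum[of n N] by blast
    show "eval a (subst (power_sum n) q - power_sum n N) = 0" for a
      by (simp only: eval_diff eval_subst_power_sum eval_power_sum q(2) diff_self)
  qed
  then have "subst (power_sum n) q = power_sum n N"
    by simp
  moreover have "q' = q" if "vars q' \<subseteq> {1..n}" "subst (power_sum n) q' = power_sum n N" for q'
  proof -
    have "q' - q = 0"
    proof (rule power_sums_algebraically_independent)
      show "vars (q' - q) \<subseteq> {1..n}"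
        using vars_diff[of q' q] that(1) q(1) by blast
      have "eval (psum n a) q' = psum n a N" for a
        using that(2) eval_subst_power_sum[of a n q'] eval_power_sum[of a n N] by simp
      then show "eval (psum n a) (q' - q) = 0" for a
        by (simp only: eval_diff q(2) diff_self)
    qed
    then show ?thesis
      by simp
  qed
  ultimately have "Q = q"
    unfolding Q_def Repr_def using q(1) by (intro the1_equality) blast+
  then show "vars Q \<subseteq> {1..n}" "eval (psum n a) Q = psum n a N"
    using q by simp_all
qed

section \<open>Complete homogeneous symmetric polynomials\<close>

fun complete_hom_list :: "'a::comm_semiring_1 list \<Rightarrow> nat \<Rightarrow> 'a" where
  "complete_hom_list [] k = (if k = 0 then 1 else 0)"
| "complete_hom_list (c # cs) k = (\<Sum>d\<le>k. c ^ d * complete_hom_list cs (k - d))"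

lemma complete_hom_list_0[simp]: "complete_hom_list X 0 = 1"
  by (induction X) auto

declare complete_hom_list.simps(2)[simp del]

lemma complete_hom_list_single: "complete_hom_list [y] K = y ^ K"
proof -
  have "complete_hom_list [y] K = (\<Sum>d\<le>K. if d = K then y ^ d else 0)"
    unfolding complete_hom_list.simps(2) by (intro sum.cong refl) auto
  then show ?thesis by simp
qed

lemma complete_hom_list_Cons_Suc:
  "complete_hom_list (c # cs) (Suc k) = complete_hom_list cs (Suc k) + c * complete_hom_list (c # cs) k"
proof -
  have "complete_hom_list (c # cs) (Suc k)
      = c ^ 0 * complete_hom_list cs (Suc k - 0) + (\<Sum>d\<le>k. c ^ Suc d * complete_hom_list cs (Suc k - Suc d))"
    by (simp only: complete_hom_list.simps sum.atMost_Suc_shift)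
  also have "\<dots> = complete_hom_list cs (Suc k) + c * complete_hom_list (c # cs) k"
    by (simp add: sum_distrib_left ac_simps complete_hom_list.simps(2))
  finally show ?thesis .
qed

lemma complete_hom_list_divided_difference:
  fixes u c :: "'a::comm_ring_1"
  shows "complete_hom_list (u # X) (Suc J)
    = complete_hom_list (c # X) (Suc J) + (u - c) * complete_hom_list (u # c # X) J"
proof (induction J)
  case 0
  show ?case
    by (simp only: complete_hom_list_Cons_Suc[of u X 0] complete_hom_list_Cons_Suc[of c X 0] complete_hom_list_0) (simp add: algebra_simps)
next
  case (Suc J)
  have "complete_hom_list (u # X) (Suc (Suc J)) - complete_hom_list (c # X) (Suc (Suc J))
      = u * complete_hom_list (u # X) (Suc J) - c * complete_hom_list (c # X) (Suc J)"
    by (simp only: complete_hom_list_Cons_Suc[of u X "Suc J"] complete_hom_list_Cons_Suc[of c X "Suc J"]) simp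
  also have "\<dots> = (u - c) * (complete_hom_list (c # X) (Suc J) + u * complete_hom_list (u # c # X) J)"
    unfolding Suc.IH by (simp add: algebra_simps)
  also have "complete_hom_list (c # X) (Suc J) + u * complete_hom_list (u # c # X) J = complete_hom_list (u # c # X) (Suc J)"
    by (simp only: complete_hom_list_Cons_Suc[of u "c # X" J])
  finally show ?case
    by (simp add: algebra_simps)
qed

lemma complete_hom_list_interpolation_step:
  fixes c :: "'a::comm_ring_1"
  assumes "degree V \<le> 2 * d" "\<And>y. y ^ 2 \<in> set Y \<Longrightarrow> poly V y = complete_hom_list (y ^ 2 # c # X) K"
  defines "W \<equiv> [:complete_hom_list (c # X) (Suc K):] + [:- c, 0, 1:] * V"
  shows "degree W \<le> 2 * Suc d" "coeff W (2 * Suc d) = coeff V (2 * d)"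
    "\<And>y. y ^ 2 \<in> set (c # Y) \<Longrightarrow> poly W y = complete_hom_list (y ^ 2 # X) (Suc K)"
proof -
  have "degree ([:- c, 0, 1:] * V) \<le> 2 + 2 * d"
    using degree_mult_le[of "[:- c, 0, 1:]" V] assms(1) by simp
  then show "degree W \<le> 2 * Suc d"
    unfolding W_def by (intro order.trans[OF degree_add_le_max]) auto
  show "coeff W (2 * Suc d) = coeff V (2 * d)"
    using assms(1) by (simp add: W_def mult_pCons_left coeff_eq_0)
next
  fix y assume y: "y ^ 2 \<in> set (c # Y)"
  show "poly W y = complete_hom_list (y ^ 2 # X) (Suc K)"
  proof (cases "y ^ 2 = c")
    case True
    then show ?thesis
      by (simp add: W_def power2_eq_square algebra_simps flip: True)
  next
    case False
    then have "poly W y = complete_hom_list (c # X) (Suc K) + (y ^ 2 - c) * complete_hom_list (y ^ 2 # c # X) K"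
      using y by (simp add: W_def assms(2) power2_eq_square algebra_simps)
    then show ?thesis
      using complete_hom_list_divided_difference[of "y ^ 2" X K c] by simp
  qed
qed

text \<open>Newton interpolation of \<open>u \<mapsto> h\<^sub>K(u, X)\<close> at the nodes \<open>Y\<close> in the variable \<open>u = y\<^sup>2\<close>: the divided
  differences are again complete homogeneous polynomials.\<close>
lemma complete_hom_list_interpolation:
  fixes Y X :: "'a::comm_ring_1 list"
  assumes "Y \<noteq> []" "length Y \<le> Suc K"
  shows "\<exists>V. degree V \<le> 2 * (length Y - 1)
    \<and> coeff V (2 * (length Y - 1)) = complete_hom_list (rev Y @ X) (Suc K - length Y)
    \<and> (\<forall>y. y ^ 2 \<in> set Y \<longrightarrow> poly V y = complete_hom_list (y ^ 2 # X) K)"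
  using assms
proof (induction Y arbitrary: X K)
  case (Cons c Y)
  show ?case
  proof (cases "Y = []")
    case True
    then show ?thesis
      by (intro exI[of _ "[:complete_hom_list (c # X) K:]"]) auto
  next
    case False
    then obtain K' d where K: "K = Suc K'" and d: "length Y = Suc d"
      using Cons.prems by (cases K; cases "length Y") auto
    with Cons.IH[OF False, of K' "c # X"] obtain V where V: "degree V \<le> 2 * d"
      "coeff V (2 * d) = complete_hom_list (rev Y @ c # X) (Suc K' - length Y)"
      "\<And>y. y ^ 2 \<in> set Y \<Longrightarrow> poly V y = complete_hom_list (y ^ 2 # c # X) K'"
      using Cons.prems by auto
    define W where "W = [:complete_hom_list (c # X) K:] + [:- c, 0, 1:] * V"
    have "degree W \<le> 2 * Suc d" "coeff W (2 * Suc d) = coeff V (2 * d)"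
      "\<And>y. y ^ 2 \<in> set (c # Y) \<Longrightarrow> poly W y = complete_hom_list (y ^ 2 # X) K"
      using complete_hom_list_interpolation_step[OF V(1) V(3)] unfolding W_def K by blast+
    with V(2) show ?thesis
      by (intro exI[of _ W]) (simp add: K d)
  qed
qed simp

definition monoms_of_degree :: "nat \<Rightarrow> nat \<Rightarrow> (nat \<Rightarrow>\<^sub>0 nat) set" where
  "monoms_of_degree i k = {m. keys m \<subseteq> {1..i} \<and> monom_degree m = k}"

lemma monoms_of_degree_Suc_bij:
  "bij_betw (\<lambda>(d, m). m + single (Suc i) d)
    (SIGMA d:{..k}. monoms_of_degree i (k - d)) (monoms_of_degree (Suc i) k)"
proof (rule bij_betwI')
  fix x y assume "x \<in> (SIGMA d:{..k}. monoms_of_degree i (k - d))"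
    and "y \<in> (SIGMA d:{..k}. monoms_of_degree i (k - d))"
  then obtain d m d' m' where xy: "x = (d, m)" "y = (d', m')" "keys m \<subseteq> {1..i}" "keys m' \<subseteq> {1..i}"
    unfolding monoms_of_degree_def by blast
  then have "lookup m (Suc i) = 0" "lookup m' (Suc i) = 0"
    by (auto simp: in_keys_iff)
  moreover have "d = d'" if "m + single (Suc i) d = m' + single (Suc i) d'"
    using arg_cong[OF that, of "\<lambda>m. lookup m (Suc i)"] calculation by (simp add: lookup_add)
  ultimately show "((\<lambda>(d, m). m + single (Suc i) d) x = (\<lambda>(d, m). m + single (Suc i) d) y) = (x = y)"
    using xy by auto
next
  fix x assume "x \<in> (SIGMA d:{..k}. monoms_of_degree i (k - d))"
  then obtain d m where x: "x = (d, m)" "d \<le> k" "keys m \<subseteq> {1..i}" "monom_degree m = k - d"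
    unfolding monoms_of_degree_def by blast
  then have "keys (m + single (Suc i) d) \<subseteq> {1..Suc i}"
    by (auto simp: keys_add_nat)
  with x show "(\<lambda>(d, m). m + single (Suc i) d) x \<in> monoms_of_degree (Suc i) k"
    by (simp add: monoms_of_degree_def monom_degree_add)
next
  fix y assume y: "y \<in> monoms_of_degree (Suc i) k"
  define d where "d = lookup y (Suc i)"
  define m where "m = y - single (Suc i) d"
  have y_eq: "y = m + single (Suc i) d"
    unfolding m_def d_def by (rule monom_split)
  have "keys m \<subseteq> {1..i}"
    using y unfolding m_def d_def keys_monom_remove monoms_of_degree_def by auto
  moreover have "monom_degree m + d = k"
    using y by (simp add: y_eq monoms_of_degree_def monom_degree_add)
  ultimately have "(d, m) \<in> (SIGMA d:{..k}. monoms_of_degree i (k - d))"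
    by (auto simp: monoms_of_degree_def)
  with y_eq show "\<exists>x\<in>(SIGMA d:{..k}. monoms_of_degree i (k - d)). y = (\<lambda>(d, m). m + single (Suc i) d) x"
    by auto
qed

lemma monoms_of_degree_0: "monoms_of_degree 0 k = (if k = 0 then {0} else {})"
proof -
  have "keys m \<subseteq> {1..0} \<longleftrightarrow> m = 0" for m :: "nat \<Rightarrow>\<^sub>0 nat" by auto
  then show ?thesis by (auto simp: monoms_of_degree_def monom_degree_def)
qed

lemma finite_monoms_of_degree: "finite (monoms_of_degree i k)"
proof (induction i arbitrary: k)
  case 0 then show ?case by (simp add: monoms_of_degree_0)
next
  case (Suc i)
  have "finite (SIGMA d:{..k}. monoms_of_degree i (k - d))" using Suc by auto
  then show ?case using bij_betw_finite[OF monoms_of_degree_Suc_bij] by blast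
qed

lemma sum_mpow_monoms_of_degree_Suc:
  "(\<Sum>m\<in>monoms_of_degree (Suc i) k. mpow c m) = (\<Sum>d\<le>k. c (Suc i) ^ d * (\<Sum>m\<in>monoms_of_degree i (k - d). mpow c m))"
proof -
  have "(\<Sum>m\<in>monoms_of_degree (Suc i) k. mpow c m) = (\<Sum>x\<in>(SIGMA d:{..k}. monoms_of_degree i (k - d)). mpow c ((\<lambda>(d, m). m + single (Suc i) d) x))"
    by (rule sum.reindex_bij_betw[OF monoms_of_degree_Suc_bij, symmetric])
  also have "\<dots> = (\<Sum>(d, m)\<in>(SIGMA d:{..k}. monoms_of_degree i (k - d)). mpow c (m + single (Suc i) d))"
    by (intro sum.cong refl) auto
  also have "\<dots> = (\<Sum>d\<le>k. \<Sum>m\<in>monoms_of_degree i (k - d). mpow c (m + single (Suc i) d))"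
    by (rule sum.Sigma[symmetric]) (auto simp: finite_monoms_of_degree)
  also have "\<dots> = (\<Sum>d\<le>k. c (Suc i) ^ d * (\<Sum>m\<in>monoms_of_degree i (k - d). mpow c m))"
    by (simp add: mpow_add mpow_single sum_distrib_left ac_simps)
  finally show ?thesis .
qed

lemma sum_mpow_monoms_of_degree: "(\<Sum>m\<in>monoms_of_degree i k. mpow c m) = complete_hom_list (map c (rev [1..<Suc i])) k"
proof (induction i arbitrary: k)
  case 0 then show ?case by (simp add: monoms_of_degree_0)
next
  case (Suc i)
  have "rev [1..<Suc (Suc i)] = Suc i # rev [1..<Suc i]" by simp
  then show ?case by (simp add: sum_mpow_monoms_of_degree_Suc Suc complete_hom_list.simps(2))
qed

lemma complete_hom_eq_sum: "complete_hom i k = (\<Sum>m\<in>monoms_of_degree i k. single m 1)"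
  by (simp add: complete_hom_def monoms_of_degree_def monom_degree_def)

lemma eval_complete_hom: "eval c (complete_hom i k) = complete_hom_list (map c (rev [1..<Suc i])) k"
  by (simp add: complete_hom_eq_sum eval_sum eval_single sum_mpow_monoms_of_degree)

lemma vars_complete_hom: "vars (complete_hom i k :: 'a::comm_semiring_1 mpoly) \<subseteq> {1..i}"
proof -
  have "vars (single m (1::'a)) \<subseteq> {1..i}" if "m \<in> monoms_of_degree i k" for m
    using that vars_single[of m "1::'a"] by (auto simp: monoms_of_degree_def)
  then show ?thesis
    unfolding complete_hom_eq_sum by (intro order.trans[OF vars_sum] UN_least)
qed

section \<open>Evaluation at the mirrored point\<close>

lemma pdiff_term_at_odd_free_point:
  fixes z :: "nat \<Rightarrow> 'a::comm_semiring_1"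
  assumes J: "odd J" "J \<le> n" "\<And>q. odd q \<Longrightarrow> q \<le> n \<Longrightarrow> q \<le> J"
    and z: "\<And>q. odd q \<Longrightarrow> q \<le> n \<Longrightarrow> z q = 0"
    and m: "keys m \<subseteq> {1..n}"
  shows "of_nat (lookup m J) * mpow z (m - single J 1)
    = (if \<forall>q. odd q \<and> q \<le> J \<longrightarrow> lookup m q = (if q = J then 1 else 0)
       then \<Prod>e\<in>{e\<in>keys m. even e}. z e ^ lookup m e else 0)"
proof (cases "\<forall>q. odd q \<and> q \<le> J \<longrightarrow> lookup m q = (if q = J then 1 else 0)")
  case True
  then have mJ: "lookup m J = 1"
    using J by auto
  have "z w ^ lookup (m - single J 1) w = (if even w then z w ^ lookup m w else 1)"
    if w: "w \<in> keys m" for w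
  proof (cases "even w")
    case False
    then have "w \<le> J"
      using J(3) m w by auto
    then show ?thesis
      using True False mJ by (cases "w = J") (auto simp: lookup_minus lookup_single)
  qed (use J in \<open>auto simp: lookup_minus lookup_single when_def\<close>)
  then have "mpow z (m - single J 1) = (\<Prod>w\<in>keys m. if even w then z w ^ lookup m w else 1)"
    by (subst mpow_superset[of "keys m"]) (auto simp: keys_diff_single intro: prod.cong)
  then show ?thesis
    using True mJ by (simp add: prod.inter_filter)
next
  case False
  then obtain q where q: "odd q" "q \<le> J" "lookup m q \<noteq> (if q = J then 1 else 0)"
    by auto
  then have zq: "z q = 0"
    using z J(2) by simp
  have "lookup m J = 0 \<or> mpow z (m - single J 1) = 0"
  proof (cases "q = J")
    case True
    then have "lookup m J \<ge> 2 \<Longrightarrow> mpow z (m - single J 1) = 0"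
      using zq by (intro mpow_eq_0[of J]) (auto simp: in_keys_iff lookup_minus)
    then show ?thesis
      using q True by (cases "lookup m J") auto
  next
    case False
    then have "mpow z (m - single J 1) = 0"
      using q zq by (intro mpow_eq_0[of q]) (auto simp: in_keys_iff lookup_minus lookup_single)
    then show ?thesis
      by simp
  qed
  then have "of_nat (lookup m J) * mpow z (m - single J 1) = 0"
    by auto
  with False show ?thesis
    by (simp only: if_not_P if_False)
qed

lemma eval_odd_coeff_eq_eval_pdiff:
  fixes f :: "'a::field_char_0 mpoly" and n :: nat
  defines "J \<equiv> 2 * ((n - 1) div 2) + 1"
  assumes n: "1 \<le> n" and vQ: "vars (Repr n f) \<subseteq> {1..n}"
    and z: "\<And>q. odd q \<Longrightarrow> q \<le> n \<Longrightarrow> z q = 0"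
  shows "eval z (odd_coeff n f (\<lambda>q. if q = J then 1 else 0)) = eval z (pdiff J (Repr n f))"
proof -
  let ?Q = "Repr n f"
  let ?P = "\<lambda>m. \<forall>q. odd q \<and> q \<le> J \<longrightarrow> lookup m q = (if q = J then 1 else 0)"
  have J: "odd J" "J \<le> n" "\<And>q. odd q \<Longrightarrow> q \<le> n \<Longrightarrow> q \<le> J"
    using n unfolding J_def by (auto elim!: oddE)
  have "eval z (pdiff J ?Q) = (\<Sum>m\<in>keys ?Q. lookup ?Q m * (of_nat (lookup m J) * mpow z (m - single J 1)))"
    by (simp add: eval_pdiff mult.assoc)
  also have "\<dots> = (\<Sum>m\<in>keys ?Q. lookup ?Q m *
      (if ?P m then \<Prod>e\<in>{e\<in>keys m. even e}. z e ^ lookup m e else 0))"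
    using vQ unfolding vars_def
    by (intro sum.cong refl arg_cong2[where f="(*)"] pdiff_term_at_odd_free_point[OF J z]) auto
  also have "\<dots> = eval z (odd_coeff n f (\<lambda>q. if q = J then 1 else 0))"
    unfolding odd_coeff_def J_def[symmetric]
    by (simp add: eval_sum eval_mult eval_prod eval_power sum.inter_filter if_distrib cong: if_cong)
  finally show ?thesis ..
qed

text \<open>The image of \<open>a\<close> under the substitution \<open>x\<^sub>l\<^sub>+\<^sub>i \<mapsto> -x\<^sub>l\<close>, \<open>x\<^sub>n \<mapsto> 0\<close>, which is the identity modulo \<open>I\<close>.\<close>
definition mirror_point :: "nat \<Rightarrow> (nat \<Rightarrow> 'a::ab_group_add) \<Rightarrow> nat \<Rightarrow> 'a" where
  "mirror_point i a v = (if v \<le> i then a v else if v \<le> 2 * i then - a (v - i) else 0)"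

lemma mirror_point_cases:
  assumes "x \<in> {1..n}" "n \<le> 2 * i + 1"
  shows "x \<in> {1..i} \<and> mirror_point i a x = a x
    \<or> i < x \<and> x - i \<in> {1..i} \<and> mirror_point i a x = - a (x - i)
    \<or> x = 2 * i + 1 \<and> mirror_point i a x = 0"
  using assms by (auto simp: mirror_point_def)

lemma inj_on_mirror_point:
  assumes a: "generic_point {1..i} a" and n: "n \<le> 2 * i + 1"
  shows "inj_on (mirror_point i a) {1..n}"
proof (rule inj_onI)
  have inj: "u = v" if "a u = a v" "u \<in> {1..i}" "v \<in> {1..i}" for u v
    using a that unfolding generic_point_def inj_on_def by blast
  have opp: "False" if "a u = - a v" "u \<in> {1..i}" "v \<in> {1..i}" for u v
    using a that unfolding generic_point_def by (auto simp: eq_neg_iff_add_eq_0)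
  have nz: "False" if "a u = 0" "u \<in> {1..i}" for u
    using opp[of u u] that by simp
  fix x y assume x: "x \<in> {1..n}" and y: "y \<in> {1..n}"
    and eq: "mirror_point i a x = mirror_point i a y"
  from mirror_point_cases[OF x n, of a] mirror_point_cases[OF y n, of a] eq show "x = y"
    by (elim disjE conjE) (auto dest: inj opp nz sym[THEN opp])
qed

lemma sum_atLeastAtMost_double:
  "(\<Sum>l\<in>{1..2*i}. f l) = (\<Sum>l\<in>{1..i}. f l + f (l + i :: nat))"
proof -
  have "(\<Sum>l\<in>{1..i+i}. f l) = (\<Sum>l\<in>{1..i}. f l) + (\<Sum>l\<in>{1+i..i+i}. f l)"
    by (subst sum.ub_add_nat) simp_all
  also have "(\<Sum>l\<in>{1+i..i+i}. f l) = (\<Sum>l\<in>{1..i}. f (l + i))"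
    by (rule sum.shift_bounds_cl_nat_ivl)
  finally show ?thesis
    by (simp add: sum.distrib mult_2)
qed

lemma psum_mirror_point_odd:
  fixes a :: "nat \<Rightarrow> 'a::comm_ring_1"
  assumes "odd q" "i = n div 2"
  shows "psum n (mirror_point i a) q = 0"
proof -
  have "psum (2 * i) (mirror_point i a) q = (\<Sum>l\<in>{1..i}. a l ^ q + (- a l) ^ q)"
    unfolding psum_def sum_atLeastAtMost_double by (intro sum.cong refl) (auto simp: mirror_point_def)
  also have "\<dots> = 0"
    using assms(1) by (simp add: power_minus_odd)
  finally have "psum (2 * i) (mirror_point i a) q = 0" .
  moreover have "n = 2 * i \<or> n = Suc (2 * i)"
    using assms(2) by arith
  moreover have "mirror_point i a (Suc (2 * i)) ^ q = 0"
    using assms(1) by (simp add: mirror_point_def zero_power odd_pos)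
  ultimately show ?thesis
    by (auto simp: psum_def)
qed

lemma mirror_point_square:
  fixes a :: "nat \<Rightarrow> 'a::comm_ring_1"
  assumes "l \<in> {1..2 * i}"
  shows "mirror_point i a l ^ 2 \<in> (\<lambda>l. a l ^ 2) ` {1..i}"
proof -
  have "mirror_point i a l ^ 2 = a (if l \<le> i then l else l - i) ^ 2"
    using assms by (simp add: mirror_point_def)
  moreover have "(if l \<le> i then l else l - i) \<in> {1..i}"
    using assms by auto
  ultimately show ?thesis
    by (simp only: image_eqI)
qed

lemma Repr_power_sum_jacobian_identity:
  fixes b :: "nat \<Rightarrow> 'a::field_char_0"
  assumes "l \<in> {1..n}" "1 \<le> N"
  shows "(\<Sum>m\<in>{1..n}. eval (psum n b) (pdiff m (Repr n (power_sum n N))) * (of_nat m * b l ^ (m - 1)))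
    = of_nat N * b l ^ (N - 1)"
proof -
  define C where "C = (\<Sum>v\<in>{1..n}. [:b v, if v = l then 1 else 0:] ^ N)"
  have "poly (pderiv C) 0
      = (\<Sum>m\<in>{1..n}. eval (psum n b) (pdiff m (Repr n (power_sum n N))) * (of_nat m * b l ^ (m - 1)))"
  proof (rule pderiv_power_sums_along_axis[OF Repr_power_sum(1) assms(1) finite.emptyI])
    fix t :: 'a
    show "eval (psum n (b(l := b l + t))) (Repr n (power_sum n N)) = poly C t"
      unfolding Repr_power_sum(2) C_def psum_def poly_sum poly_power by (intro sum.cong refl) auto
  qed
  then show ?thesis
    using poly_pderiv_shifted_power_sum[OF assms, of b] unfolding C_def by simp
qed

lemma mirror_point_interpolant:
  fixes a :: "nat \<Rightarrow> 'a::comm_ring_1" and n k :: nat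
  assumes "2 \<le> n"
  defines "i \<equiv> n div 2" and "j \<equiv> (n - 1) div 2"
  obtains S where "degree S < n"
    "coeff S (2 * j) = of_nat (2 * k + 2 * j + 1) * complete_hom_list (map (\<lambda>l. a l ^ 2) (rev [1..<Suc i])) k"
    "\<And>l. l \<in> {1..n} \<Longrightarrow>
      poly S (mirror_point i a l) = of_nat (2 * k + 2 * j + 1) * mirror_point i a l ^ (2 * k + 2 * j)"
proof -
  define e where "e = n - 2 * i"
  define Y where "Y = map (\<lambda>l. a l ^ 2) [1..<Suc i]"
  have ij: "1 \<le> i" "e \<le> 1" "n = 2 * i + e" "j = i - 1 + e"
    using assms(1) unfolding i_def j_def e_def by arith+
  have "Y \<noteq> []" "length Y = i"
    using ij(1) by (auto simp: Y_def)
  then obtain V where V: "degree V \<le> 2 * (i - 1)" "coeff V (2 * (i - 1)) = complete_hom_list (rev Y) k"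
    "\<And>y. y ^ 2 \<in> set Y \<Longrightarrow> poly V y = y ^ (2 * (k + i - 1))"
    using complete_hom_list_interpolation[of Y "k + i - 1" "[]"] ij(1)
    by (auto simp: complete_hom_list_single power_mult)
  \<comment> \<open>\<open>V\<close> interpolates \<open>y\<^bsup>2(k+i-1)\<^esup>\<close> at the \<open>\<plusminus>a\<^sub>l\<close>; the factor \<open>y\<^bsup>2e\<^esup>\<close> takes care of the node \<open>0\<close> for odd \<open>n\<close>.\<close>
  define S where "S = smult (of_nat (2 * k + 2 * j + 1)) (monom 1 (2 * e) * V)"
  show thesis
  proof
    have "degree S \<le> 2 * e + 2 * (i - 1)"
      unfolding S_def using V(1) degree_mult_le[of "monom 1 (2 * e)" V] degree_monom_le[of "1::'a" "2 * e"]
      by (intro order.trans[OF degree_smult_le]) linarith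
    then show "degree S < n"
      using ij by linarith
    have "2 * j = 2 * e + 2 * (i - 1)"
      using ij by arith
    then show "coeff S (2 * j) = of_nat (2 * k + 2 * j + 1) * complete_hom_list (map (\<lambda>l. a l ^ 2) (rev [1..<Suc i])) k"
      using V(2) by (simp only: S_def coeff_smult coeff_monom_mult Y_def rev_map) simp
  next
    fix l assume l: "l \<in> {1..n}"
    show "poly S (mirror_point i a l) = of_nat (2 * k + 2 * j + 1) * mirror_point i a l ^ (2 * k + 2 * j)"
    proof (cases "l \<le> 2 * i")
      case True
      have "set Y = (\<lambda>l. a l ^ 2) ` {1..i}"
        unfolding Y_def set_map set_upt by auto
      then have "mirror_point i a l ^ 2 \<in> set Y"
        using mirror_point_square[of l i a] l True by simp
      then show ?thesis
        using ij by (simp add: S_def poly_monom V(3) flip: power_add) (simp add: algebra_simps)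
    next
      case False
      then have "e = 1"
        using ij l by auto
      moreover have "2 * k + 2 * j \<noteq> 0"
        using ij \<open>e = 1\<close> by auto
      ultimately show ?thesis
        using False by (simp add: S_def mirror_point_def poly_monom zero_power)
    qed
  qed
qed

lemma eval_r_mirror_point:
  fixes a :: "nat \<Rightarrow> 'a::field_char_0" and n k :: nat
  assumes n: "2 \<le> n" and a: "generic_point {1..n} a"
  defines "i \<equiv> n div 2" and "j \<equiv> (n - 1) div 2"
  shows "eval (mirror_point i a) (r n (2 * k + 2 * j + 1) :: 'a mpoly)
    = of_nat (2 * k + 2 * j + 1) / of_nat (2 * j + 1) * complete_hom_list (map (\<lambda>l. a l ^ 2) (rev [1..<Suc i])) k"
proof -
  define b where "b = mirror_point i a"
  define N where "N = 2 * k + 2 * j + 1"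
  define Q where "Q = Repr n (power_sum n N :: 'a mpoly)"
  have r: "eval b (r n N :: 'a mpoly) = eval (psum n b) (pdiff (2 * j + 1) Q)"
    unfolding r_def multiplier_def eval_subst_power_sum j_def Q_def
    using n Repr_power_sum(1) psum_mirror_point_odd[of _ i n a]
    by (intro eval_odd_coeff_eq_eval_pdiff) (auto simp: b_def i_def)
  obtain S where S: "degree S < n"
    "coeff S (2 * j) = of_nat N * complete_hom_list (map (\<lambda>l. a l ^ 2) (rev [1..<Suc i])) k"
    "\<And>l. l \<in> {1..n} \<Longrightarrow> poly S (b l) = of_nat N * b l ^ (N - 1)"
    using mirror_point_interpolant[OF n, of k a] unfolding b_def N_def i_def j_def by auto
  have coeff: "eval (psum n b) (pdiff (2 * j + 1) Q) * of_nat (2 * j + 1) = coeff S (2 * j + 1 - 1)"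
  proof (rule coeff_eq_if_interpolates[where c="\<lambda>m. eval (psum n b) (pdiff m Q) * of_nat m", OF _ S(1)])
    show "inj_on b {1..n}"
      unfolding b_def i_def using n a generic_point_subset[of "{1..n}" a "{1..n div 2}"]
      by (intro inj_on_mirror_point) auto
    show "(\<Sum>m\<in>{1..n}. eval (psum n b) (pdiff m Q) * of_nat m * b l ^ (m - 1)) = poly S (b l)"
      if "l \<in> {1..n}" for l
      using Repr_power_sum_jacobian_identity[OF that, of N b] S(3)[OF that]
      by (simp add: Q_def N_def mult.assoc)
    show "2 * j + 1 \<in> {1..n}"
      using n unfolding j_def by auto
  qed
  have "(of_nat (2 * j + 1) :: 'a) \<noteq> 0"
    by (simp only: of_nat_eq_0_iff)
  with r coeff S(2) have "eval b (r n N)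
      = of_nat N * complete_hom_list (map (\<lambda>l. a l ^ 2) (rev [1..<Suc i])) k / of_nat (2 * j + 1)"
    by (simp add: eq_divide_eq)
  then show ?thesis
    by (simp add: b_def N_def)
qed

lemma ideal_gen_zero: "0 \<in> ideal_gen n G"
  unfolding ideal_gen_def by (intro CollectI exI[of _ "\<lambda>_. 0"]) simp

lemma ideal_gen_mem:
  assumes "finite G" "g \<in> G"
  shows "g \<in> ideal_gen n (G :: 'a::comm_semiring_1 mpoly set)"
  unfolding ideal_gen_def
proof (intro CollectI exI[of _ "\<lambda>g'. if g' = g then 1 else 0"] conjI)
  show "\<forall>g'\<in>G. vars (if g' = g then 1 else 0) \<subseteq> {1..n}"
    by (simp add: vars_def)
  have "(\<Sum>g'\<in>G. (if g' = g then 1 else 0) * g') = (\<Sum>g'\<in>G. if g' = g then g' else 0)"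
    by (intro sum.cong) auto
  then show "g = (\<Sum>g'\<in>G. (if g' = g then 1 else 0) * g')"
    using assms by simp
qed

lemma ideal_gen_add:
  assumes "f \<in> ideal_gen n G" "h \<in> ideal_gen n G"
  shows "f + h \<in> ideal_gen n (G :: 'a::comm_semiring_1 mpoly set)"
proof -
  obtain c d where "\<forall>g\<in>G. vars (c g) \<subseteq> {1..n}" "f = (\<Sum>g\<in>G. c g * g)"
    "\<forall>g\<in>G. vars (d g) \<subseteq> {1..n}" "h = (\<Sum>g\<in>G. d g * g)"
    using assms unfolding ideal_gen_def by blast
  moreover have "\<forall>g\<in>G. vars (c g + d g) \<subseteq> {1..n}"
    using calculation(1,3) vars_add by blast
  ultimately show ?thesis
    unfolding ideal_gen_def
    by (intro CollectI exI[of _ "\<lambda>g. c g + d g"] conjI) (simp_all add: distrib_right sum.distrib)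
qed

lemma ideal_gen_mult:
  assumes "f \<in> ideal_gen n G" "vars h \<subseteq> {1..n}"
  shows "h * f \<in> ideal_gen n (G :: 'a::comm_semiring_1 mpoly set)"
proof -
  obtain c where "\<forall>g\<in>G. vars (c g) \<subseteq> {1..n}" "f = (\<Sum>g\<in>G. c g * g)"
    using assms(1) unfolding ideal_gen_def by blast
  moreover have "\<forall>g\<in>G. vars (h * c g) \<subseteq> {1..n}"
    using calculation(1) assms(2) vars_mult by blast
  ultimately show ?thesis
    unfolding ideal_gen_def
    by (intro CollectI exI[of _ "\<lambda>g. h * c g"] conjI) (simp_all add: sum_distrib_left mult.assoc)
qed

lemma ideal_gen_sum:
  "(\<And>x. x \<in> S \<Longrightarrow> f x \<in> ideal_gen n G) \<Longrightarrow> sum f S \<in> ideal_gen n (G :: 'a::comm_semiring_1 mpoly set)"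
  by (induction S rule: infinite_finite_induct) (auto simp: ideal_gen_zero ideal_gen_add)

lemma ideal_gen_power_diff:
  assumes "x - y \<in> ideal_gen n G" "vars x \<subseteq> {1..n}" "vars y \<subseteq> {1..n}"
  shows "x ^ e - y ^ e \<in> ideal_gen n (G :: 'a::comm_ring_1 mpoly set)"
proof -
  have "vars (y ^ (e - Suc i) * x ^ i) \<subseteq> {1..n}" for i
    using vars_mult[of "y ^ (e - Suc i)" "x ^ i"] vars_power[of y "e - Suc i"] vars_power[of x i] assms(2,3)
    by blast
  then have "vars (\<Sum>i<e. y ^ (e - Suc i) * x ^ i) \<subseteq> {1..n}"
    by (intro order.trans[OF vars_sum] UN_least)
  from ideal_gen_mult[OF assms(1) this] show ?thesis
    by (simp add: power_diff_sumr2 mult.commute)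
qed

lemma ideal_gen_prod_diff:
  assumes "\<And>w. w \<in> S \<Longrightarrow> x w - y w \<in> ideal_gen n G"
    "\<And>w. w \<in> S \<Longrightarrow> vars (x w) \<subseteq> {1..n}" "\<And>w. w \<in> S \<Longrightarrow> vars (y w) \<subseteq> {1..n}"
  shows "prod x S - prod y S \<in> ideal_gen n (G :: 'a::comm_ring_1 mpoly set)"
  using assms
proof (induction S rule: infinite_finite_induct)
  case (insert s F)
  have "prod x (insert s F) - prod y (insert s F) = x s * (prod x F - prod y F) + prod y F * (x s - y s)"
    using insert.hyps by (simp add: algebra_simps)
  moreover have "vars (prod y F) \<subseteq> {1..n}"
    using vars_prod[of y F] insert.prems(3) by blast
  ultimately show ?case
    by (metis ideal_gen_add ideal_gen_mult insert.IH insert.prems insertCI)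
qed (simp_all add: ideal_gen_zero)

lemma Var_power: "(Var w :: 'a::comm_semiring_1 mpoly) ^ e = single (single w e) 1"
proof (induction e)
  case (Suc e)
  have "single w (Suc e) = single w 1 + single w e"
    by (simp flip: single_add)
  then show ?case
    using Suc by (simp add: Var_def mult_single)
qed simp

lemma subst_Var: "subst Var p = (p :: 'a::comm_semiring_1 mpoly)"
proof -
  have "(\<Prod>w\<in>S. (Var w :: 'a mpoly) ^ e w) = single (\<Sum>w\<in>S. single w (e w)) 1" for S and e :: "nat \<Rightarrow> nat"
    by (induction S rule: infinite_finite_induct) (simp_all add: Var_power mult_single)
  then have "Const c * (\<Prod>w\<in>keys m. (Var w :: 'a mpoly) ^ lookup m w) = single m c" for c m
    by (simp add: Const_def mult_single flip: poly_mapping_sum_single)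
  then show ?thesis
    unfolding subst_def by (simp flip: poly_mapping_sum_single)
qed

lemma ideal_gen_diff_subst:
  fixes f :: "'a::comm_ring_1 mpoly"
  assumes "vars f \<subseteq> {1..n}"
    and "\<And>v. v \<in> {1..n} \<Longrightarrow> Var v - \<sigma> v \<in> ideal_gen n G"
    and "\<And>v. v \<in> {1..n} \<Longrightarrow> vars (\<sigma> v) \<subseteq> {1..n}"
  shows "f - subst \<sigma> f \<in> ideal_gen n G"
proof -
  have "f - subst \<sigma> f = (\<Sum>m\<in>keys f. Const (lookup f m) *
      ((\<Prod>v\<in>keys m. Var v ^ lookup m v) - (\<Prod>v\<in>keys m. \<sigma> v ^ lookup m v)))"
    by (subst (1) subst_Var[symmetric]) (simp add: subst_def sum_subtractf algebra_simps)
  also have "\<dots> \<in> ideal_gen n G"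
  proof (intro ideal_gen_sum ideal_gen_mult ideal_gen_prod_diff ideal_gen_power_diff)
    fix m w assume "m \<in> keys f" "w \<in> keys m"
    then have w: "w \<in> {1..n}"
      using assms(1) unfolding vars_def by auto
    then show "Var w - \<sigma> w \<in> ideal_gen n G" "vars (Var w :: 'a mpoly) \<subseteq> {1..n}" "vars (\<sigma> w) \<subseteq> {1..n}"
      using assms(2,3) vars_Var[of w] by auto
    then show "vars (Var w ^ lookup m w :: 'a mpoly) \<subseteq> {1..n}" "vars (\<sigma> w ^ lookup m w) \<subseteq> {1..n}"
      using vars_power by blast+
  qed simp
  finally show ?thesis .
qed

definition mirror_subst :: "nat \<Rightarrow> nat \<Rightarrow> 'a::comm_ring_1 mpoly" where
  "mirror_subst i v = (if v \<le> i then Var v else if v \<le> 2 * i then - Var (v - i) else 0)"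

lemma eval_mirror_subst: "(\<lambda>v. eval a (mirror_subst i v)) = mirror_point i a"
  by (rule ext) (simp add: mirror_subst_def mirror_point_def eval_uminus)

lemma vars_mirror_subst:
  assumes "v \<in> {1..n}" "2 * i \<le> n"
  shows "vars (mirror_subst i v :: 'a::comm_ring_1 mpoly) \<subseteq> {1..n}"
proof -
  have "vars (Var w :: 'a mpoly) \<subseteq> {1..n}" if "w \<in> {1..n}" for w
    using that vars_Var[of w] by auto
  moreover have "v - i \<in> {1..n}" if "\<not> v \<le> i"
    using assms that by auto
  ultimately show ?thesis
    using assms(1) by (auto simp: mirror_subst_def)
qed

lemma Var_minus_mirror_subst_in_ideal:
  assumes "v \<in> {1..n}"
  shows "Var v - mirror_subst (n div 2) v \<in> ideal_gen n (I_gens n :: 'a::comm_ring_1 mpoly set)"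
proof -
  let ?i = "n div 2"
  have fin: "finite (I_gens n :: 'a mpoly set)"
    by (simp add: I_gens_def)
  consider "v \<le> ?i" | "?i < v" "v \<le> 2 * ?i" | "2 * ?i < v"
    by linarith
  then show ?thesis
  proof cases
    case 1
    then show ?thesis
      by (simp add: mirror_subst_def ideal_gen_zero)
  next
    case 2
    then have "Var v - mirror_subst ?i v = Var ((v - ?i) + ?i) + Var (v - ?i)"
      by (simp add: mirror_subst_def)
    moreover have "v - ?i \<in> {1..?i}"
      using 2 by auto
    ultimately have "Var v - mirror_subst ?i v \<in> I_gens n"
      unfolding I_gens_def by (intro UnI1) auto
    then show ?thesis
      by (rule ideal_gen_mem[OF fin])
  next
    case 3
    then have "v = n" "odd n"
      using assms by auto
    then have "Var v - mirror_subst ?i v \<in> I_gens n"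
      using 3 by (simp add: mirror_subst_def I_gens_def)
    then show ?thesis
      by (rule ideal_gen_mem[OF fin])
  qed
qed

lemma vars_subst_squares:
  "vars (subst (\<lambda>l. Var l ^ 2) p :: 'a::comm_semiring_1 mpoly) \<subseteq> vars p"
  using vars_power[of "Var _" 2] vars_Var by (intro vars_subst_subset) blast

lemma subst_mirror_eq_0:
  fixes n k :: nat
  assumes n: "2 \<le> n"
  defines "i \<equiv> n div 2" and "N \<equiv> 2 * k + 2 * ((n - 1) div 2) + 1"
  shows "subst (mirror_subst i) (r n N - Const (of_nat N / of_nat (2 * ((n - 1) div 2) + 1))
      * subst (\<lambda>l. Var l ^ 2) (complete_hom i k) :: 'a::field_char_0 mpoly) = 0"
    (is "subst _ ?T = 0")
proof (rule mpoly_eq_0_if_vanishes_on_generic)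
  have "vars (subst (\<lambda>l. Var l ^ 2) (complete_hom i k) :: 'a mpoly) \<subseteq> {1..i}"
    using vars_subst_squares vars_complete_hom by blast
  moreover have "vars (r n N :: 'a mpoly) \<subseteq> {1..n}"
    unfolding r_def multiplier_def by (rule vars_subst_power_sum)
  ultimately have "vars ?T \<subseteq> {1..n}"
    unfolding i_def using vars_diff vars_mult[of "Const _"] by fastforce
  then show "vars (subst (mirror_subst i) ?T) \<subseteq> {1..n}"
    by (intro vars_subst_subset vars_mirror_subst) (auto simp: i_def)
next
  fix a :: "nat \<Rightarrow> 'a" assume a: "generic_point {1..n} a"
  have h: "complete_hom_list (map (\<lambda>l. mirror_point i a l ^ 2) (rev [1..<Suc i])) k
      = complete_hom_list (map (\<lambda>l. a l ^ 2) (rev [1..<Suc i])) k"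
    by (rule arg_cong[where f="\<lambda>x. complete_hom_list x k"], rule map_cong) (auto simp: mirror_point_def)
  have "eval a (subst (mirror_subst i) ?T) = eval (mirror_point i a) (r n N)
      - of_nat N / of_nat (2 * ((n - 1) div 2) + 1)
        * complete_hom_list (map (\<lambda>l. mirror_point i a l ^ 2) (rev [1..<Suc i])) k"
    by (simp add: eval_subst eval_mirror_subst eval_diff eval_mult eval_power eval_complete_hom)
  also have "\<dots> = 0"
    unfolding h unfolding i_def N_def eval_r_mirror_point[OF n a] by simp
  finally show "eval a (subst (mirror_subst i) ?T) = 0" .
qed

theorem mainTheorem4:
  fixes n k :: nat
  assumes "n \<ge> 2"
  shows "(r n (2 * k + 2 * ((n - 1) div 2) + 1) :: 'a::field_char_0 mpoly)
          - Const (of_nat (2 * k + 2 * ((n - 1) div 2) + 1) / of_nat (2 * ((n - 1) div 2) + 1))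
            * subst (\<lambda>l. Var l ^ 2) (complete_hom (n div 2) k)
         \<in> ideal_gen n (I_gens n)"
    (is "?T \<in> _")
proof -
  have "vars (subst (\<lambda>l. Var l ^ 2) (complete_hom (n div 2) k) :: 'a mpoly) \<subseteq> {1..n}"
    using vars_subst_squares vars_complete_hom by fastforce
  moreover have "vars (r n (2 * k + 2 * ((n - 1) div 2) + 1) :: 'a mpoly) \<subseteq> {1..n}"
    unfolding r_def multiplier_def by (rule vars_subst_power_sum)
  ultimately have "vars ?T \<subseteq> {1..n}"
    using vars_diff vars_mult[of "Const _"] by fastforce
  from ideal_gen_diff_subst[OF this Var_minus_mirror_subst_in_ideal vars_mirror_subst]
  show ?thesis
    using subst_mirror_eq_0[OF assms, of k, where 'a='a] by simp
qed

end
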